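(* For all half-integers $a',b',c',d',p',q'\in\tfrac12\mathbb{Z}$, $$\sum_{X'\in\frac12\mathbb{Z}}(2X'+1)\begin{Bmatrix}a'&b'&X'\\c'&d'&p'\end{Bmatrix}_{ext}\begin{Bmatrix}a'&b'&X'\\c'&d'&q'\end{Bmatrix}_{ext}=\delta_{p'q'}\,\frac{\{a'p'd'\}_{SU(1,1)}\,\{b'c'p'\}_{SU(1,1)}}{2p'+1},$$ where only finitely many terms of the sum are nonzero.
   Context: A triple of reals $(x,y,z)$ (order matters) is SU(2)-admissible if $x+y-z\ge0$, $x-y+z\ge0$, $-x+y+z\ge0$, $x+y+z\ge-1$; it is SU(1,1)-admissible if $z\ge x+y+1$, $x\le y+z$, $y\le x+z$, $x+y+z\ge-1$. For half-integers, $\{xyz\}_{SU(1,1)}$ equals $1$ if $(x,y,z)$ is SU(1,1)-admissible and $x+y+z\in\mathbb{Z}$, and $0$ otherwise. The SU(2) 6j symbol of a 6-tuple of reals is $$\begin{Bmatrix}a&b&c\\d&e&f\end{Bmatrix}_{SU(2)}=\Delta(abc)\Delta(cde)\Delta(bdf)\Delta(aef)\sum_n\frac{(-1)^n(n+1)!}{(n-a-b-c)!(n-c-d-e)!(n-b-d-f)!(n-a-e-f)!(a+b+d+e-n)!(a+c+d+f-n)!(b+c+e+f-n)!},$$ with $\Delta(xyz)=\sqrt{\frac{(x+y-z)!(x-y+z)!(-x+y+z)!}{(x+y+z+1)!}}$. The sum is over integers $n$ for which all factorial arguments are nonnegative integers, and the symbol is defined to be $0$ whenever any factorial appearing in the $\Delta$'s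 has an argument that is not a nonnegative integer. Let $S:(a',b',c',d',e',f')\mapsto(a,b,c,d,e,f)$ with $a=\tfrac12(a'+b'-d'+e')$, $b=\tfrac12(-a'-b'-d'+e')-1$, $c=c'$, $d=\tfrac12(-a'+b'+d'+e')$, $e=\tfrac12(a'-b'+d'+e')$, $f=f'$. The extension is defined by $\begin{Bmatrix}a'&b'&c'\\d'&e'&f'\end{Bmatrix}_{ext}:=\begin{Bmatrix}a&b&c\\d&e&f\end{Bmatrix}_{SU(2)}$, where $(a,\dots,f)=S(a',\dots,f')$. *)

theory Defs
  imports Complex_Main
begin

text \<open>Factorial of a real argument; only used when the argument is a nonnegative integer.\<close>
definition rfact :: "real \<Rightarrow> real" where
  "rfact r = fact (nat \<lfloor>r\<rfloor>)"

definition delta_ok :: "real \<Rightarrow> real \<Rightarrow> real \<Rightarrow> bool" where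
  "delta_ok x y z \<longleftrightarrow> x + y - z \<in> \<nat> \<and> x - y + z \<in> \<nat> \<and> - x + y + z \<in> \<nat> \<and> x + y + z + 1 \<in> \<nat>"

definition Delta :: "real \<Rightarrow> real \<Rightarrow> real \<Rightarrow> real" where
  "Delta x y z = sqrt (rfact (x + y - z) * rfact (x - y + z) * rfact (- x + y + z) / rfact (x + y + z + 1))"

definition racah_ok :: "real \<Rightarrow> real \<Rightarrow> real \<Rightarrow> real \<Rightarrow> real \<Rightarrow> real \<Rightarrow> int \<Rightarrow> bool" where
  "racah_ok a b c d e f n \<longleftrightarrow>
     real_of_int n + 1 \<in> \<nat> \<and>
     real_of_int n - a - b - c \<in> \<nat> \<and> real_of_int n - c - d - e \<in> \<nat> \<and>
     real_of_int n - b - d - f \<in> \<nat> \<and> real_of_int n - a - e - f \<in> \<nat> \<and>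
     a + b + d + e - real_of_int n \<in> \<nat> \<and> a + c + d + f - real_of_int n \<in> \<nat> \<and>
     b + c + e + f - real_of_int n \<in> \<nat>"

definition sixj_SU2 :: "real \<Rightarrow> real \<Rightarrow> real \<Rightarrow> real \<Rightarrow> real \<Rightarrow> real \<Rightarrow> real" where
  "sixj_SU2 a b c d e f =
    (if delta_ok a b c \<and> delta_ok c d e \<and> delta_ok b d f \<and> delta_ok a e f then
       Delta a b c * Delta c d e * Delta b d f * Delta a e f *
       (\<Sum>n\<in>{n. racah_ok a b c d e f n}.
          (-1) ^ nat \<bar>n\<bar> * rfact (real_of_int n + 1) /
          (rfact (real_of_int n - a - b - c) * rfact (real_of_int n - c - d - e) *
           rfact (real_of_int n - b - d - f) * rfact (real_of_int n - a - e - f) *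
           rfact (a + b + d + e - real_of_int n) * rfact (a + c + d + f - real_of_int n) *
           rfact (b + c + e + f - real_of_int n)))
     else 0)"

text \<open>The extended 6j symbol: SU(2) 6j symbol composed with the map S.\<close>
definition sixj_ext :: "real \<Rightarrow> real \<Rightarrow> real \<Rightarrow> real \<Rightarrow> real \<Rightarrow> real \<Rightarrow> real" where
  "sixj_ext a' b' c' d' e' f' =
     sixj_SU2 ((a' + b' - d' + e') / 2) ((- a' - b' - d' + e') / 2 - 1) c'
              ((- a' + b' + d' + e') / 2) ((a' - b' + d' + e') / 2) f'"

definition su11_adm :: "real \<Rightarrow> real \<Rightarrow> real \<Rightarrow> bool" where
  "su11_adm x y z \<longleftrightarrow> z \<ge> x + y + 1 \<and> x \<le> y + z \<and> y \<le> x + z \<and> x + y + z \<ge> -1"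

definition su11_sym :: "real \<Rightarrow> real \<Rightarrow> real \<Rightarrow> real" where
  "su11_sym x y z = (if su11_adm x y z \<and> x + y + z \<in> \<int> then 1 else 0)"

end

theory Submission
  imports Defs
begin

text \<open>After the substitution \<open>S\<close> the sum is the orthogonality relation of the SU(2) \<open>6j\<close> symbols,
  \<open>\<Sum>\<^sub>c (2c + 1) {a b c; d e f} {a b c; d e f'} = [f = f'] [b d f] [a e f] / (2f + 1)\<close> with
  \<open>[x y z]\<close> the triangle condition, and the two triangle conditions of \<open>S(a', b', X, c', d', p')\<close>
  that involve \<open>p'\<close> are exactly the SU(1,1) admissibility conditions of \<open>(a', p', d')\<close> and
  \<open>(b', c', p')\<close>.

  The SU(2) relation is proved from the Racah sum. A Zeilberger certificate gives a three-term
  recurrence in \<open>c\<close>, which makes \<open>c \<mapsto> {a b c; d e f}\<close> an eigenvector, with eigenvalue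
  \<open>f (f + 1)\<close>, of a difference operator that is symmetric for the weight
  \<open>\<Delta>(a b c)\<^sup>2 \<Delta>(c d e)\<^sup>2\<close>; this gives orthogonality. By the symmetry
  \<open>{a b c; d e f} = {d b f; a e c}\<close> the same recurrence holds in \<open>f\<close>, and pairing it with
  orthogonality shows that the normalised norm does not change under \<open>f \<mapsto> f + 1\<close>. At the
  largest admissible \<open>f\<close> the Racah sum has a single term, and the norm is a hypergeometric sum that
  is evaluated by a WZ pair.\<close>

section \<open>Factorials of real arguments\<close>

definition fact_N :: "real \<Rightarrow> real" where
  "fact_N x = (if x \<in> \<nat> then fact (nat \<lfloor>x\<rfloor>) else 0)"

text \<open>On the integers \<open>inv_fact_N x\<close> is \<open>1 / \<Gamma>(x + 1)\<close>, which vanishes at the negative integers.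
  Hence \<open>inv_fact_N_succ\<close> below holds for every real \<open>x\<close>, and sums of hypergeometric terms can run
  over a fixed range of indices.\<close>
definition inv_fact_N :: "real \<Rightarrow> real" where
  "inv_fact_N x = (if x \<in> \<nat> then 1 / fact (nat \<lfloor>x\<rfloor>) else 0)"

lemma Nats_iff_of_nat: "(x::real) \<in> \<nat> \<longleftrightarrow> (\<exists>n. x = real n)"
  by (auto simp: Nats_def)

lemma Nats_nonneg: "(x::real) \<in> \<nat> \<Longrightarrow> 0 \<le> x"
  by (auto simp: Nats_iff_of_nat)

lemma Nats_add_one_iff: "(x::real) + 1 \<in> \<nat> \<longleftrightarrow> x \<in> \<nat> \<or> x = -1"
proof
  assume "x + 1 \<in> \<nat>"
  then obtain m where m: "x + 1 = real m" by (auto simp: Nats_iff_of_nat)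
  then show "x \<in> \<nat> \<or> x = -1"
    by (cases m) (auto simp: algebra_simps)
next
  assume "x \<in> \<nat> \<or> x = -1"
  then show "x + 1 \<in> \<nat>" by auto
qed

lemma fact_N_of_nat [simp]: "fact_N (real n) = fact n"
  by (simp add: fact_N_def)

lemma inv_fact_N_of_nat [simp]: "inv_fact_N (real n) = 1 / fact n"
  by (simp add: inv_fact_N_def)

lemma fact_N_0 [simp]: "fact_N 0 = 1" and inv_fact_N_0 [simp]: "inv_fact_N 0 = 1"
  by (simp_all add: fact_N_def inv_fact_N_def)

lemma fact_N_eq_0_iff: "fact_N x = 0 \<longleftrightarrow> x \<notin> \<nat>"
  by (simp add: fact_N_def)

lemma inv_fact_N_eq_0_iff: "inv_fact_N x = 0 \<longleftrightarrow> x \<notin> \<nat>"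
  by (simp add: inv_fact_N_def)

lemma fact_N_nonneg: "0 \<le> fact_N x" and inv_fact_N_nonneg: "0 \<le> inv_fact_N x"
  by (simp_all add: fact_N_def inv_fact_N_def)

lemma inv_fact_N_neg: "x < 0 \<Longrightarrow> inv_fact_N x = 0"
  using Nats_nonneg by (force simp: inv_fact_N_eq_0_iff)

lemma fact_N_neg: "x < 0 \<Longrightarrow> fact_N x = 0"
  using Nats_nonneg by (force simp: fact_N_eq_0_iff)

lemma fact_N_mult_inv_fact_N: "x \<in> \<nat> \<Longrightarrow> fact_N x * inv_fact_N x = 1"
  by (simp add: fact_N_def inv_fact_N_def)

lemma fact_N_mult_inv_fact_N_square: "fact_N x * inv_fact_N x * inv_fact_N x = inv_fact_N x"
  by (simp add: fact_N_def inv_fact_N_def)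

lemma inv_fact_N_succ: "inv_fact_N x = (x + 1) * inv_fact_N (x + 1)"
proof (cases "x \<in> \<nat>")
  case True
  then obtain n where n: "x = real n" by (auto simp: Nats_iff_of_nat)
  then have "inv_fact_N (x + 1) = 1 / fact (Suc n)"
    by (metis inv_fact_N_of_nat of_nat_Suc add.commute)
  moreover have "(fact (Suc n) :: real) = (real n + 1) * fact n" by simp
  moreover have "(fact n :: real) + fact n * real n > 0" by (simp add: add_pos_nonneg)
  ultimately show ?thesis using n by (simp add: field_simps)
next
  case False
  then show ?thesis
    by (cases "x = -1") (auto simp: inv_fact_N_def Nats_add_one_iff)
qed

lemma inv_fact_N_pred: "y = x - 1 \<Longrightarrow> z = x \<Longrightarrow> inv_fact_N y = z * inv_fact_N x"
  using inv_fact_N_succ[of "x - 1"] by simp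

lemma inv_fact_N_pred2: "y = x - 2 \<Longrightarrow> z = x - 1 \<Longrightarrow> inv_fact_N y = z * x * inv_fact_N x"
  using inv_fact_N_pred[of y "x - 1" "x - 1"] inv_fact_N_pred[of "x - 1" x x] by simp

lemma fact_N_succ: "x \<noteq> -1 \<Longrightarrow> fact_N (x + 1) = (x + 1) * fact_N x"
proof (cases "x \<in> \<nat>")
  case True
  then obtain n where "x = real n" by (auto simp: Nats_iff_of_nat)
  then show ?thesis
    using fact_N_of_nat[of "Suc n"] by (simp add: algebra_simps)
qed (auto simp: fact_N_def Nats_add_one_iff)

lemma fact_N_mult_inv_fact_N_succ: "x \<in> \<nat> \<Longrightarrow> (x + 1) * fact_N x * inv_fact_N (x + 1) = 1"
  using inv_fact_N_succ[of x] fact_N_mult_inv_fact_N[of x] by (simp add: ac_simps)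

lemma minus_one_power_nat_abs_succ: "(-1::'a::ring_1) ^ nat (\<bar>n + 1\<bar>) = - ((-1) ^ nat \<bar>n\<bar>)"
proof (cases "n \<ge> 0")
  case True
  then have "nat \<bar>n + 1\<bar> = Suc (nat \<bar>n\<bar>)" by simp
  then show ?thesis by (metis power_Suc mult_minus1)
next
  case False
  then have "nat \<bar>n\<bar> = Suc (nat \<bar>n + 1\<bar>)" by simp
  then show ?thesis by (metis power_Suc mult_minus1 minus_minus)
qed

lemma telescope_int:
  fixes G :: "int \<Rightarrow> 'a::ab_group_add"
  assumes "m \<le> N + 1"
  shows "(\<Sum>n\<in>{m..N}. G (n + 1) - G n) = G (N + 1) - G m"
proof -
  obtain k where k: "N = m + int k - 1"
    using assms by (metis add_diff_cancel_right' zle_iff_zadd)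
  show ?thesis unfolding k
  proof (induction k)
    case (Suc k)
    have "{m..m + int (Suc k) - 1} = insert (m + int k) {m..m + int k - 1}" by auto
    then show ?case using Suc by (simp add: algebra_simps)
  qed simp
qed

lemma sum_telescoping_eq_0:
  fixes G h :: "int \<Rightarrow> 'a::ab_group_add"
  assumes "\<And>n. m \<le> n \<Longrightarrow> n \<le> N \<Longrightarrow> h n = G (n + 1) - G n" and "G m = 0" and "G (N + 1) = 0"
  shows "(\<Sum>n\<in>{m..N}. h n) = 0"
proof (cases "m \<le> N + 1")
  case True
  have "(\<Sum>n\<in>{m..N}. h n) = (\<Sum>n\<in>{m..N}. G (n + 1) - G n)"
    using assms(1) by (intro sum.cong) auto
  then show ?thesis using telescope_int[OF True, of G] assms(2,3) by simp
qed simp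

section \<open>The Racah sum and its recurrence in \<open>c\<close>\<close>

text \<open>The Racah sum of the \<open>6j\<close> symbol
  \<open>{a b c; d e f}\<close>; with \<open>inv_fact_N\<close> all admissible \<open>n\<close> lie in the fixed range
  \<open>-1 \<le> n \<le> a + b + d + e\<close>.\<close>
definition racah_term :: "real \<Rightarrow> real \<Rightarrow> real \<Rightarrow> real \<Rightarrow> real \<Rightarrow> real \<Rightarrow> int \<Rightarrow> real" where
  "racah_term a b c d e f n = (-1) ^ nat \<bar>n\<bar> * fact_N (of_int n + 1) *
     inv_fact_N (of_int n - a - b - c) * inv_fact_N (of_int n - c - d - e) *
     inv_fact_N (of_int n - b - d - f) * inv_fact_N (of_int n - a - e - f) *
     inv_fact_N (a + b + d + e - of_int n) * inv_fact_N (a + c + d + f - of_int n) *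
     inv_fact_N (b + c + e + f - of_int n)"

definition racah :: "real \<Rightarrow> real \<Rightarrow> real \<Rightarrow> real \<Rightarrow> real \<Rightarrow> real \<Rightarrow> real" where
  "racah a b c d e f = (\<Sum>n\<in>{-1..\<lceil>a + b + d + e\<rceil>}. racah_term a b c d e f n)"

lemma racah_swap_ad_cf: "racah a b c d e f = racah d b f a e c"
  unfolding racah_def racah_term_def by (simp add: algebra_simps)

lemma racah_swap_ab_de: "racah a b c d e f = racah b a c e d f"
  unfolding racah_def racah_term_def by (simp add: algebra_simps)

definition racah_rec_up :: "real \<Rightarrow> real \<Rightarrow> real \<Rightarrow> real \<Rightarrow> real \<Rightarrow> real" where
  "racah_rec_up a b c d e = (c + 1 + a - b) * (c + 1 - a + b) * (c + 1 + d - e) * (c + 1 - d + e)"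

definition racah_rec_down :: "real \<Rightarrow> real \<Rightarrow> real \<Rightarrow> real \<Rightarrow> real \<Rightarrow> real" where
  "racah_rec_down a b c d e = (a + b + 1 - c) * (a + b + 1 + c) * (d + e + 1 - c) * (d + e + 1 + c)"

definition racah_rec_mid :: "real \<Rightarrow> real \<Rightarrow> real \<Rightarrow> real \<Rightarrow> real \<Rightarrow> real \<Rightarrow> real" where
  "racah_rec_mid a b c d e f = (2*c + 1) *
     (c*(c + 1) * (- c*(c + 1) + a*(a + 1) + b*(b + 1) - 2*f*(f + 1))
      + d*(d + 1) * (c*(c + 1) + a*(a + 1) - b*(b + 1))
      + e*(e + 1) * (c*(c + 1) - a*(a + 1) + b*(b + 1)))"

text \<open>Zeilberger certificate of the three-term recurrence in \<open>c\<close>, as a polynomial in the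
  summation index \<open>m\<close>.\<close>
definition racah_rec_cert :: "real \<Rightarrow> real \<Rightarrow> real \<Rightarrow> real \<Rightarrow> real \<Rightarrow> real \<Rightarrow> real \<Rightarrow> real" where
  "racah_rec_cert a b c d e f m =
     (a^2*b*c^2 - a^2*b*c*d - a^2*b*c*e - a^2*b*d - a^2*b*e - a^2*b - 3*a^2*c^2*d + a^2*c^2*f
      - a^2*c*d^2 - a^2*c*d*e - a^2*c*d*f - 3*a^2*c*d - a^2*c*e*f - 3*a^2*c*e - a^2*c
      - a^2*d*e - a^2*d*f - a^2*d - a^2*e^2 - a^2*e*f - 2*a^2*e - a^2*f - a^2 + a*b^2*c^2
      - a*b^2*c*d - a*b^2*c*e - a*b^2*d - a*b^2*e - a*b^2 + 3*a*b*c^3 - 2*a*b*c^2*d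
      - 2*a*b*c^2*e + 2*a*b*c^2*f + 3*a*b*c^2 - a*b*c*d^2 - 2*a*b*c*d*e - 2*a*b*c*d*f
      - 6*a*b*c*d - a*b*c*e^2 - 2*a*b*c*e*f - 6*a*b*c*e - 3*a*b*c - a*b*d^2 - 2*a*b*d*e
      - 2*a*b*d*f - 4*a*b*d - a*b*e^2 - 2*a*b*e*f - 4*a*b*e - 2*a*b*f - 3*a*b - 5*a*c^3*d
      + 3*a*c^3*f + a*c^3 - 3*a*c^2*d^2 - 2*a*c^2*d*e - 2*a*c^2*d*f - 9*a*c^2*d - 2*a*c^2*e*f
      - 6*a*c^2*e + a*c^2*f^2 + 3*a*c^2*f - a*c^2 - a*c*d^2*e - a*c*d^2*f - 3*a*c*d^2
      - a*c*d*e^2 - 2*a*c*d*e*f - 6*a*c*d*e - a*c*d*f^2 - 6*a*c*d*f - 8*a*c*d - a*c*e^2*f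
      - 3*a*c*e^2 - a*c*e*f^2 - 6*a*c*e*f - 9*a*c*e - 3*a*c*f - 4*a*c - a*d^2*e - a*d^2*f
      - a*d^2 - a*d*e^2 - 2*a*d*e*f - 4*a*d*e - a*d*f^2 - 4*a*d*f - 3*a*d - a*e^2*f - 2*a*e^2
      - a*e*f^2 - 4*a*e*f - 4*a*e - a*f^2 - 3*a*f - 2*a - 3*b^2*c^2*e + b^2*c^2*f - b^2*c*d*e
      - b^2*c*d*f - 3*b^2*c*d - b^2*c*e^2 - b^2*c*e*f - 3*b^2*c*e - b^2*c - b^2*d^2 - b^2*d*e
      - b^2*d*f - 2*b^2*d - b^2*e*f - b^2*e - b^2*f - b^2 - 5*b*c^3*e + 3*b*c^3*f + b*c^3
      - 2*b*c^2*d*e - 2*b*c^2*d*f - 6*b*c^2*d - 3*b*c^2*e^2 - 2*b*c^2*e*f - 9*b*c^2*e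
      + b*c^2*f^2 + 3*b*c^2*f - b*c^2 - b*c*d^2*e - b*c*d^2*f - 3*b*c*d^2 - b*c*d*e^2
      - 2*b*c*d*e*f - 6*b*c*d*e - b*c*d*f^2 - 6*b*c*d*f - 9*b*c*d - b*c*e^2*f - 3*b*c*e^2
      - b*c*e*f^2 - 6*b*c*e*f - 8*b*c*e - 3*b*c*f - 4*b*c - b*d^2*e - b*d^2*f - 2*b*d^2
      - b*d*e^2 - 2*b*d*e*f - 4*b*d*e - b*d*f^2 - 4*b*d*f - 4*b*d - b*e^2*f - b*e^2 - b*e*f^2
      - 4*b*e*f - 3*b*e - b*f^2 - 3*b*f - 2*b + 4*c^4*f + 3*c^4 + 3*c^3*d*e + 3*c^3*d*f
      + c^3*d + 3*c^3*e*f + c^3*e + 3*c^3*f^2 + 10*c^3*f + 5*c^3 + c^2*d^2*e + c^2*d^2*f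
      + c^2*d*e^2 + 2*c^2*d*e*f + 3*c^2*d*e + c^2*d*f^2 + 3*c^2*d*f - c^2*d + c^2*e^2*f
      + c^2*e*f^2 + 3*c^2*e*f - c^2*e + 3*c^2*f^2 + 4*c^2*f - c*d^2 - 3*c*d*e - 3*c*d*f
      - 4*c*d - c*e^2 - 3*c*e*f - 4*c*e - c*f^2 - 4*c*f - 3*c - d^2*e - d^2*f - d^2 - d*e^2
      - 2*d*e*f - 3*d*e - d*f^2 - 3*d*f - 2*d - e^2*f - e^2 - e*f^2 - 3*e*f - 2*e - f^2 - 2*f
      - 1)
   + (2*a^2*c*d + a^2*c + a^2*d + a^2*e + a^2 - 2*a*b*c^2 + 2*a*b*c*d + 2*a*b*c*e + 2*a*b*d
      + 2*a*b*e + 2*a*b + 6*a*c^2*d - 2*a*c^2*f + a*c^2 + 2*a*c*d^2 + 2*a*c*d*e + 2*a*c*d*f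
      + 8*a*c*d + 2*a*c*e*f + 6*a*c*e + 4*a*c + a*d^2 + 2*a*d*e + 2*a*d*f + 4*a*d + a*e^2
      + 2*a*e*f + 4*a*e + 2*a*f + 3*a + 2*b^2*c*e + b^2*c + b^2*d + b^2*e + b^2 + 6*b*c^2*e
      - 2*b*c^2*f + b*c^2 + 2*b*c*d*e + 2*b*c*d*f + 6*b*c*d + 2*b*c*e^2 + 2*b*c*e*f + 8*b*c*e
      + 4*b*c + b*d^2 + 2*b*d*e + 2*b*d*f + 4*b*d + b*e^2 + 2*b*e*f + 4*b*e + 2*b*f + 3*b
      - 6*c^3*f - 4*c^3 - 2*c^2*d*e - 2*c^2*d*f + c^2*d - 2*c^2*e*f + c^2*e - 2*c^2*f^2
      - 10*c^2*f - 4*c^2 + c*d^2 + 4*c*d + c*e^2 + 4*c*e - 2*c*f^2 - 2*c*f + 2*c + d^2 + 2*d*e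
      + 2*d*f + 3*d + e^2 + 2*e*f + 3*e + 2*f + 2) * m
   + (- 2*a*c*d - a*c - a*d - a*e - a - 2*b*c*e - b*c - b*d - b*e - b + 2*c^2*f + c^2 - c*d
      - c*e + 2*c*f - d - e - 1) * m^2"

lemma racah_rec_cert_identity:
  fixes a b c d e f m :: real
  shows "- (m + 2) * (a + b + d + e - m) * (a + c + d + f - m + 1) * (b + c + e + f - m + 1)
           * racah_rec_cert a b c d e f (m + 1)
         - (m - a - b - c + 1) * (m - c - d - e + 1) * (m - b - d - f) * (m - a - e - f)
           * racah_rec_cert a b c d e f m
   = c * racah_rec_up a b c d e * ((m - a - b - c) * (m - a - b - c + 1) * (m - c - d - e) * (m - c - d - e + 1))
     + racah_rec_mid a b c d e f * ((m - a - b - c + 1) * (m - c - d - e + 1) * (a + c + d + f - m + 1) * (b + c + e + f - m + 1))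
     + (c + 1) * racah_rec_down a b c d e * ((a + c + d + f - m) * (a + c + d + f - m + 1) * (b + c + e + f - m) * (b + c + e + f - m + 1))"
  unfolding racah_rec_up_def racah_rec_down_def racah_rec_mid_def racah_rec_cert_def
  by algebra

text \<open>The hypergeometric factor shared by the terms of \<open>racah\<close> at \<open>c - 1\<close>, \<open>c\<close>, \<open>c + 1\<close> and by
  the antidifference \<open>racah_rec_antidiff\<close> at \<open>n\<close> and \<open>n + 1\<close>.\<close>
definition racah_rec_core :: "real \<Rightarrow> real \<Rightarrow> real \<Rightarrow> real \<Rightarrow> real \<Rightarrow> real \<Rightarrow> int \<Rightarrow> real" where
  "racah_rec_core a b c d e f n = (-1) ^ nat \<bar>n\<bar> * fact_N (of_int n + 1) *
     inv_fact_N (of_int n - a - b - c + 1) * inv_fact_N (of_int n - c - d - e + 1) *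
     inv_fact_N (of_int n - b - d - f) * inv_fact_N (of_int n - a - e - f) *
     inv_fact_N (a + b + d + e - of_int n) * inv_fact_N (a + c + d + f - of_int n + 1) *
     inv_fact_N (b + c + e + f - of_int n + 1)"

definition racah_rec_antidiff :: "real \<Rightarrow> real \<Rightarrow> real \<Rightarrow> real \<Rightarrow> real \<Rightarrow> real \<Rightarrow> int \<Rightarrow> real" where
  "racah_rec_antidiff a b c d e f n = (-1) ^ nat \<bar>n\<bar> * fact_N (of_int n + 1) *
     inv_fact_N (of_int n - a - b - c) * inv_fact_N (of_int n - c - d - e) *
     inv_fact_N (of_int n - b - d - f - 1) * inv_fact_N (of_int n - a - e - f - 1) *
     inv_fact_N (a + b + d + e - of_int n) * inv_fact_N (a + c + d + f - of_int n + 1) *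
     inv_fact_N (b + c + e + f - of_int n + 1) * racah_rec_cert a b c d e f (of_int n)"

lemma racah_term_eq_core:
  fixes n :: int
  defines "m \<equiv> real_of_int n"
  shows "racah_term a b c d e f n = racah_rec_core a b c d e f n *
    ((m - a - b - c + 1) * (m - c - d - e + 1) * (a + c + d + f - m + 1) * (b + c + e + f - m + 1))"
proof -
  have "inv_fact_N (m - a - b - c) = (m - a - b - c + 1) * inv_fact_N (m - a - b - c + 1)"
    and "inv_fact_N (m - c - d - e) = (m - c - d - e + 1) * inv_fact_N (m - c - d - e + 1)"
    and "inv_fact_N (a + c + d + f - m) = (a + c + d + f - m + 1) * inv_fact_N (a + c + d + f - m + 1)"
    and "inv_fact_N (b + c + e + f - m) = (b + c + e + f - m + 1) * inv_fact_N (b + c + e + f - m + 1)"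
    by (rule inv_fact_N_succ)+
  then show ?thesis
    unfolding racah_term_def racah_rec_core_def m_def[symmetric] by (simp only: mult_ac)
qed

lemma racah_term_succ_eq_core:
  fixes n :: int
  defines "m \<equiv> real_of_int n"
  shows "racah_term a b (c + 1) d e f n = racah_rec_core a b c d e f n *
    ((m - a - b - c) * (m - a - b - c + 1) * (m - c - d - e) * (m - c - d - e + 1))"
proof -
  have "inv_fact_N (m - a - b - (c + 1)) = (m - a - b - c) * (m - a - b - c + 1) * inv_fact_N (m - a - b - c + 1)"
    and "inv_fact_N (m - (c + 1) - d - e) = (m - c - d - e) * (m - c - d - e + 1) * inv_fact_N (m - c - d - e + 1)"
    by (rule inv_fact_N_pred2; simp)+
  moreover have "inv_fact_N (a + (c + 1) + d + f - m) = inv_fact_N (a + c + d + f - m + 1)"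
    and "inv_fact_N (b + (c + 1) + e + f - m) = inv_fact_N (b + c + e + f - m + 1)"
    by (rule arg_cong[where f = inv_fact_N]; simp)+
  ultimately show ?thesis
    unfolding racah_term_def racah_rec_core_def m_def[symmetric] by (simp only: mult_ac)
qed

lemma racah_term_pred_eq_core:
  fixes n :: int
  defines "m \<equiv> real_of_int n"
  shows "racah_term a b (c - 1) d e f n = racah_rec_core a b c d e f n *
    ((a + c + d + f - m) * (a + c + d + f - m + 1) * (b + c + e + f - m) * (b + c + e + f - m + 1))"
proof -
  have "inv_fact_N (a + (c - 1) + d + f - m) = (a + c + d + f - m) * (a + c + d + f - m + 1) * inv_fact_N (a + c + d + f - m + 1)"
    and "inv_fact_N (b + (c - 1) + e + f - m) = (b + c + e + f - m) * (b + c + e + f - m + 1) * inv_fact_N (b + c + e + f - m + 1)"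
    by (rule inv_fact_N_pred2; simp)+
  moreover have "inv_fact_N (m - a - b - (c - 1)) = inv_fact_N (m - a - b - c + 1)"
    and "inv_fact_N (m - (c - 1) - d - e) = inv_fact_N (m - c - d - e + 1)"
    by (rule arg_cong[where f = inv_fact_N]; simp)+
  ultimately show ?thesis
    unfolding racah_term_def racah_rec_core_def m_def[symmetric] by (simp only: mult_ac)
qed

lemma racah_rec_antidiff_eq_core:
  fixes n :: int
  defines "m \<equiv> real_of_int n"
  shows "racah_rec_antidiff a b c d e f n = racah_rec_core a b c d e f n *
    ((m - a - b - c + 1) * (m - c - d - e + 1) * (m - b - d - f) * (m - a - e - f) * racah_rec_cert a b c d e f m)"
proof -
  have "inv_fact_N (m - a - b - c) = (m - a - b - c + 1) * inv_fact_N (m - a - b - c + 1)"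
    and "inv_fact_N (m - c - d - e) = (m - c - d - e + 1) * inv_fact_N (m - c - d - e + 1)"
    by (rule inv_fact_N_succ)+
  moreover have "inv_fact_N (m - b - d - f - 1) = (m - b - d - f) * inv_fact_N (m - b - d - f)"
    and "inv_fact_N (m - a - e - f - 1) = (m - a - e - f) * inv_fact_N (m - a - e - f)"
    by (rule inv_fact_N_pred; simp)+
  ultimately show ?thesis
    unfolding racah_rec_antidiff_def racah_rec_core_def m_def[symmetric] by (simp only: mult_ac)
qed

lemma racah_rec_antidiff_succ_eq_core:
  fixes n :: int
  assumes "n \<ge> -1"
  defines "m \<equiv> real_of_int n"
  shows "racah_rec_antidiff a b c d e f (n + 1) = racah_rec_core a b c d e f n *
    (- (m + 2) * (a + b + d + e - m) * (a + c + d + f - m + 1) * (b + c + e + f - m + 1) * racah_rec_cert a b c d e f (m + 1))"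
proof -
  have "fact_N (real_of_int (n + 1) + 1) = (m + 2) * fact_N (m + 1)"
    using fact_N_succ[of "m + 1"] assms by (simp add: m_def algebra_simps)
  moreover have "inv_fact_N (a + b + d + e - real_of_int (n + 1)) = (a + b + d + e - m) * inv_fact_N (a + b + d + e - m)"
    and "inv_fact_N (a + c + d + f - real_of_int (n + 1) + 1) = (a + c + d + f - m + 1) * inv_fact_N (a + c + d + f - m + 1)"
    and "inv_fact_N (b + c + e + f - real_of_int (n + 1) + 1) = (b + c + e + f - m + 1) * inv_fact_N (b + c + e + f - m + 1)"
    by (rule inv_fact_N_pred; simp add: m_def)+
  moreover have "inv_fact_N (real_of_int (n + 1) - a - b - c) = inv_fact_N (m - a - b - c + 1)"
    and "inv_fact_N (real_of_int (n + 1) - c - d - e) = inv_fact_N (m - c - d - e + 1)"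
    and "inv_fact_N (real_of_int (n + 1) - b - d - f - 1) = inv_fact_N (m - b - d - f)"
    and "inv_fact_N (real_of_int (n + 1) - a - e - f - 1) = inv_fact_N (m - a - e - f)"
    and "racah_rec_cert a b c d e f (real_of_int (n + 1)) = racah_rec_cert a b c d e f (m + 1)"
    by (rule arg_cong[where f = inv_fact_N] arg_cong[where f = "racah_rec_cert a b c d e f"];
        simp add: m_def)+
  ultimately show ?thesis
    unfolding racah_rec_antidiff_def racah_rec_core_def minus_one_power_nat_abs_succ m_def[symmetric]
    by (simp only: mult_ac mult_minus_left mult_minus_right)
qed

lemma racah_rec_telescoping:
  assumes "n \<ge> -1"
  shows "c * racah_rec_up a b c d e * racah_term a b (c + 1) d e f n
       + racah_rec_mid a b c d e f * racah_term a b c d e f n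
       + (c + 1) * racah_rec_down a b c d e * racah_term a b (c - 1) d e f n
     = racah_rec_antidiff a b c d e f (n + 1) - racah_rec_antidiff a b c d e f n"
  unfolding racah_rec_antidiff_succ_eq_core[OF assms]
  unfolding racah_term_succ_eq_core racah_term_pred_eq_core
  unfolding racah_term_eq_core racah_rec_antidiff_eq_core
  by (simp only: mult.left_commute[of _ "racah_rec_core a b c d e f n"] right_diff_distrib[symmetric]
      distrib_left[symmetric] racah_rec_cert_identity)

lemma racah_three_term_rec:
  assumes "0 \<le> b + d + f"
  shows "c * racah_rec_up a b c d e * racah a b (c + 1) d e f
       + racah_rec_mid a b c d e f * racah a b c d e f
       + (c + 1) * racah_rec_down a b c d e * racah a b (c - 1) d e f = 0"
proof -
  define N where "N = \<lceil>a + b + d + e\<rceil>"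
  have "c * racah_rec_up a b c d e * racah a b (c + 1) d e f
       + racah_rec_mid a b c d e f * racah a b c d e f
       + (c + 1) * racah_rec_down a b c d e * racah a b (c - 1) d e f
     = (\<Sum>n\<in>{-1..N}. c * racah_rec_up a b c d e * racah_term a b (c + 1) d e f n
       + racah_rec_mid a b c d e f * racah_term a b c d e f n
       + (c + 1) * racah_rec_down a b c d e * racah_term a b (c - 1) d e f n)"
    unfolding racah_def N_def by (simp add: sum.distrib sum_distrib_left)
  also have "\<dots> = 0"
  proof (rule sum_telescoping_eq_0)
    show "racah_rec_antidiff a b c d e f (-1) = 0"
      using assms by (simp add: racah_rec_antidiff_def inv_fact_N_neg)
    have "a + b + d + e - real_of_int (N + 1) < 0"
      unfolding N_def by linarith
    then show "racah_rec_antidiff a b c d e f (N + 1) = 0"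
      by (simp add: racah_rec_antidiff_def inv_fact_N_neg del: of_int_add)
  qed (rule racah_rec_telescoping)
  finally show ?thesis .
qed

text \<open>At \<open>c = 0\<close> the recurrence above loses its \<open>racah (c + 1)\<close> term; for \<open>a = b\<close>, \<open>d = e\<close>
  (the only case in which \<open>racah a b 0 d e f\<close> can be nonzero) it is replaced by the following one.\<close>
definition racah_zero_core :: "real \<Rightarrow> real \<Rightarrow> real \<Rightarrow> int \<Rightarrow> real" where
  "racah_zero_core a d f n = (-1) ^ nat \<bar>n\<bar> * fact_N (of_int n + 1) *
     inv_fact_N (of_int n - 2*a) * inv_fact_N (of_int n - 2*d) *
     inv_fact_N (of_int n - a - d - f + 1) * inv_fact_N (of_int n - a - d - f + 1) *
     inv_fact_N (2*a + 2*d - of_int n) *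
     inv_fact_N (1 - (of_int n - a - d - f)) * inv_fact_N (1 - (of_int n - a - d - f))"

lemma racah_term_at_zero_eq_core:
  fixes a d f :: real and n :: int
  assumes n: "-1 \<le> n"
  defines "m \<equiv> real_of_int n" and "u \<equiv> real_of_int n - a - d - f"
  shows "racah_term a a 0 d d f n = racah_zero_core a d f n * ((u + 1) * (u + 1) * (1 - u) * (1 - u))"
    and "racah_term a a 1 d d f n = racah_zero_core a d f n * ((m - 2*a) * (m - 2*d) * (u + 1) * (u + 1))"
    and "racah_term a a 1 d d f (n + 1) = racah_zero_core a d f n * (- (m + 2) * (2*a + 2*d - m) * (1 - u) * (1 - u))"
proof -
  have core: "racah_zero_core a d f n = (-1) ^ nat \<bar>n\<bar> * fact_N (m + 1) * inv_fact_N (m - 2*a) * inv_fact_N (m - 2*d) *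
    inv_fact_N (u + 1) * inv_fact_N (u + 1) * inv_fact_N (2*a + 2*d - m) * inv_fact_N (1 - u) * inv_fact_N (1 - u)"
    unfolding racah_zero_core_def m_def u_def ..
  have su: "inv_fact_N u = (u + 1) * inv_fact_N (u + 1)" by (rule inv_fact_N_succ)
  have snu: "inv_fact_N (- u) = (1 - u) * inv_fact_N (1 - u)" by (rule inv_fact_N_pred) simp_all
  have "racah_term a a 0 d d f n = (-1) ^ nat \<bar>n\<bar> * fact_N (m + 1) * inv_fact_N (m - 2*a) *
    inv_fact_N (m - 2*d) * inv_fact_N u * inv_fact_N u * inv_fact_N (2*a + 2*d - m) * inv_fact_N (- u) * inv_fact_N (- u)"
    unfolding racah_term_def m_def u_def by (simp add: algebra_simps)
  then show "racah_term a a 0 d d f n = racah_zero_core a d f n * ((u + 1) * (u + 1) * (1 - u) * (1 - u))"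
    unfolding su snu core by (simp only: mult_ac)
  have "inv_fact_N (m - 2*a - 1) = (m - 2*a) * inv_fact_N (m - 2*a)"
    and "inv_fact_N (m - 2*d - 1) = (m - 2*d) * inv_fact_N (m - 2*d)"
    by (rule inv_fact_N_pred; simp)+
  moreover have "racah_term a a 1 d d f n = (-1) ^ nat \<bar>n\<bar> * fact_N (m + 1) * inv_fact_N (m - 2*a - 1) *
    inv_fact_N (m - 2*d - 1) * inv_fact_N u * inv_fact_N u * inv_fact_N (2*a + 2*d - m) * inv_fact_N (1 - u) * inv_fact_N (1 - u)"
    unfolding racah_term_def m_def u_def by (simp add: algebra_simps)
  ultimately show "racah_term a a 1 d d f n = racah_zero_core a d f n * ((m - 2*a) * (m - 2*d) * (u + 1) * (u + 1))"
    unfolding su core by (simp only: mult_ac)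
  have "fact_N (m + 1 + 1) = (m + 2) * fact_N (m + 1)"
    using fact_N_succ[of "m + 1"] n by (simp add: m_def algebra_simps)
  moreover have "inv_fact_N (2*a + 2*d - m - 1) = (2*a + 2*d - m) * inv_fact_N (2*a + 2*d - m)"
    by (rule inv_fact_N_pred) simp_all
  moreover have "racah_term a a 1 d d f (n + 1) = (-1) ^ nat \<bar>n + 1\<bar> * fact_N (m + 1 + 1) * inv_fact_N (m - 2*a) *
    inv_fact_N (m - 2*d) * inv_fact_N (u + 1) * inv_fact_N (u + 1) * inv_fact_N (2*a + 2*d - m - 1) *
    inv_fact_N (- u) * inv_fact_N (- u)"
    unfolding racah_term_def u_def m_def by (simp add: algebra_simps)
  ultimately show "racah_term a a 1 d d f (n + 1) = racah_zero_core a d f n * (- (m + 2) * (2*a + 2*d - m) * (1 - u) * (1 - u))"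
    unfolding minus_one_power_nat_abs_succ snu core by (simp only: mult_ac mult_minus_left mult_minus_right)
qed

lemma racah_rec_at_zero_telescoping:
  fixes a d f :: real and n :: int
  assumes n: "-1 \<le> n"
  defines "G \<equiv> \<lambda>n::int. - (of_int n - (a + d + f)) * racah_term a a 1 d d f n"
  shows "racah_term a a 1 d d f n + 2 * (a*(a + 1) + d*(d + 1) - f*(f + 1)) * racah_term a a 0 d d f n
    = G (n + 1) - G n"
proof -
  define m u K where "m = real_of_int n" and "u = real_of_int n - a - d - f" and "K = racah_zero_core a d f n"
  have T: "racah_term a a 0 d d f n = K * ((u + 1) * (u + 1) * (1 - u) * (1 - u))"
    "racah_term a a 1 d d f n = K * ((m - 2*a) * (m - 2*d) * (u + 1) * (u + 1))"
    "racah_term a a 1 d d f (n + 1) = K * (- (m + 2) * (2*a + 2*d - m) * (1 - u) * (1 - u))"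
    unfolding m_def u_def K_def by (rule racah_term_at_zero_eq_core[OF n])+
  have G0: "G n = K * (- u * ((m - 2*a) * (m - 2*d) * (u + 1) * (u + 1)))"
    unfolding G_def T(2) by (simp add: u_def m_def)
  have G1: "G (n + 1) = K * ((u + 1) * ((m + 2) * (2*a + 2*d - m) * (1 - u) * (1 - u)))"
    unfolding G_def T(3) by (simp add: u_def m_def algebra_simps)
  show ?thesis
  proof (cases "K = 0")
    case False
    then have "u + 1 \<in> \<nat>" "1 - u \<in> \<nat>"
      unfolding K_def racah_zero_core_def u_def by (auto simp: inv_fact_N_eq_0_iff)
    then obtain i j :: nat where ij: "u + 1 = real i" "1 - u = real j"
      by (auto simp: Nats_iff_of_nat)
    then have "i + j = 2" by linarith
    then have "u = -1 \<or> u = 0 \<or> u = 1" using ij by (cases i; cases j) auto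
    moreover have "m = u + a + d + f" by (simp add: u_def m_def)
    ultimately show ?thesis unfolding T(1,2) G0 G1 by (auto simp: algebra_simps)
  qed (simp add: T(1,2) G0 G1)
qed

lemma racah_rec_at_zero:
  assumes "0 \<le> a" "0 \<le> d" "0 \<le> f"
  shows "racah a a 1 d d f + 2 * (a*(a + 1) + d*(d + 1) - f*(f + 1)) * racah a a 0 d d f = 0"
proof -
  define N where "N = \<lceil>a + a + d + d\<rceil>"
  define G where "G = (\<lambda>n::int. - (of_int n - (a + d + f)) * racah_term a a 1 d d f n)"
  have "racah a a 1 d d f + 2 * (a*(a + 1) + d*(d + 1) - f*(f + 1)) * racah a a 0 d d f
    = (\<Sum>n\<in>{-1..N}. racah_term a a 1 d d f n + 2 * (a*(a + 1) + d*(d + 1) - f*(f + 1)) * racah_term a a 0 d d f n)"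
    unfolding racah_def N_def by (simp add: sum.distrib sum_distrib_left)
  also have "\<dots> = 0"
  proof (rule sum_telescoping_eq_0)
    show "G (-1) = 0"
      using assms by (simp add: G_def racah_term_def inv_fact_N_neg)
    have "a + a + d + d - real_of_int (N + 1) < 0"
      unfolding N_def by linarith
    then show "G (N + 1) = 0"
      by (simp add: G_def racah_term_def inv_fact_N_neg del: of_int_add)
  next
    fix n :: int
    assume "-1 \<le> n"
    from racah_rec_at_zero_telescoping[OF this, of a d f]
    show "racah_term a a 1 d d f n + 2 * (a*(a + 1) + d*(d + 1) - f*(f + 1)) * racah_term a a 0 d d f n
      = G (n + 1) - G n" unfolding G_def .
  qed
  finally show ?thesis .
qed

section \<open>Triads and the orthogonality weight\<close>

definition triad :: "real \<Rightarrow> real \<Rightarrow> real \<Rightarrow> bool" where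
  "triad x y z \<longleftrightarrow> x + y - z \<in> \<nat> \<and> x - y + z \<in> \<nat> \<and> - x + y + z \<in> \<nat>"

lemma triad_ge: assumes "triad x y z" shows "0 \<le> x + y - z" "0 \<le> x - y + z" "0 \<le> - x + y + z"
  using assms Nats_nonneg unfolding triad_def by blast+

lemma triad_nonneg: assumes "triad x y z" shows "0 \<le> x" "0 \<le> y" "0 \<le> z"
  using triad_ge[OF assms] by linarith+

lemma triad_le_add: "triad x y z \<Longrightarrow> z \<le> x + y"
  using triad_ge by fastforce

lemma triad_zero: "triad x y 0 \<Longrightarrow> x = y"
  using triad_ge[of x y 0] by simp

lemma triad_sum_Nats: "triad x y z \<Longrightarrow> x + y + z + 1 \<in> \<nat>"
proof -
  assume "triad x y z"
  then have h: "x + y - z \<in> \<nat>" "x - y + z \<in> \<nat>" "- x + y + z \<in> \<nat>"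
    unfolding triad_def by blast+
  have "(x + y - z) + (x - y + z) + (- x + y + z) + 1 \<in> \<nat>"
    by (intro Nats_add h Nats_1)
  then show ?thesis by (simp add: algebra_simps)
qed

lemma triad_double_Nats: assumes "triad x y z" shows "2*x \<in> \<nat>" "2*y \<in> \<nat>" "2*z \<in> \<nat>"
proof -
  have h: "x + y - z \<in> \<nat>" "x - y + z \<in> \<nat>" "- x + y + z \<in> \<nat>"
    using assms unfolding triad_def by blast+
  have "2*x = (x + y - z) + (x - y + z)" "2*y = (x + y - z) + (- x + y + z)"
    "2*z = (x - y + z) + (- x + y + z)" by simp_all
  then show "2*x \<in> \<nat>" "2*y \<in> \<nat>" "2*z \<in> \<nat>"
    using h by (metis Nats_add)+
qed

lemma triad_swap_12: "triad x y z \<longleftrightarrow> triad y x z"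
  and triad_swap_13: "triad x y z \<longleftrightarrow> triad z y x"
  and triad_rotate: "triad x y z \<longleftrightarrow> triad z x y"
  unfolding triad_def by (auto simp: algebra_simps)

lemma triad_add_nat:
  assumes "triad x y z" and "z + real m \<le> x + y"
  shows "triad x y (z + real m)"
proof -
  have h: "x + y - z \<in> \<nat>" "x - y + z \<in> \<nat>" "- x + y + z \<in> \<nat>"
    using assms(1) unfolding triad_def by blast+
  have "x + y - (z + real m) = (x + y - z) - real m" "x - y + (z + real m) = (x - y + z) + real m"
    "- x + y + (z + real m) = (- x + y + z) + real m" by simp_all
  then show ?thesis
    unfolding triad_def using h assms(2) by (metis Nats_add Nats_diff of_nat_in_Nats diff_ge_0_iff_ge diff_diff_eq)
qed

lemma racah_nonzero_imp_triads:
  assumes "racah a b c d e f \<noteq> 0"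
  shows "triad a b c \<and> triad c d e \<and> triad b d f \<and> triad a e f"
proof -
  obtain n where "racah_term a b c d e f n \<noteq> 0"
    using assms unfolding racah_def by (meson sum.neutral)
  then have h: "of_int n - a - b - c \<in> \<nat>" "of_int n - c - d - e \<in> \<nat>"
     "of_int n - b - d - f \<in> \<nat>" "of_int n - a - e - f \<in> \<nat>"
     "a + b + d + e - of_int n \<in> \<nat>" "a + c + d + f - of_int n \<in> \<nat>"
     "b + c + e + f - of_int n \<in> \<nat>"
    unfolding racah_term_def by (auto simp: inv_fact_N_eq_0_iff)
  have sum: "\<And>u v w. u \<in> \<nat> \<Longrightarrow> v \<in> \<nat> \<Longrightarrow> w = u + v \<Longrightarrow> (w::real) \<in> \<nat>"
    by simp
  have "a + b - c \<in> \<nat>" "a - b + c \<in> \<nat>" "- a + b + c \<in> \<nat>"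
    by (rule sum[OF h(5) h(2)] sum[OF h(6) h(3)] sum[OF h(7) h(4)]; simp)+
  moreover have "c + d - e \<in> \<nat>" "c - d + e \<in> \<nat>" "- c + d + e \<in> \<nat>"
    by (rule sum[OF h(6) h(4)] sum[OF h(7) h(3)] sum[OF h(5) h(1)]; simp)+
  moreover have "b + d - f \<in> \<nat>" "b - d + f \<in> \<nat>" "- b + d + f \<in> \<nat>"
    by (rule sum[OF h(5) h(4)] sum[OF h(7) h(2)] sum[OF h(6) h(1)]; simp)+
  moreover have "a + e - f \<in> \<nat>" "a - e + f \<in> \<nat>" "- a + e + f \<in> \<nat>"
    by (rule sum[OF h(5) h(3)] sum[OF h(6) h(2)] sum[OF h(7) h(1)]; simp)+
  ultimately show ?thesis unfolding triad_def by blast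
qed

text \<open>The square of the triangle coefficient \<open>Delta\<close>.\<close>
definition tri_coeff :: "real \<Rightarrow> real \<Rightarrow> real \<Rightarrow> real" where
  "tri_coeff x y z = fact_N (x + y - z) * fact_N (x - y + z) * fact_N (- x + y + z) * inv_fact_N (x + y + z + 1)"

lemma tri_coeff_nonzero_iff: "tri_coeff x y z \<noteq> 0 \<longleftrightarrow> triad x y z"
proof
  assume "tri_coeff x y z \<noteq> 0"
  then show "triad x y z"
    unfolding tri_coeff_def triad_def by (auto simp: fact_N_eq_0_iff)
next
  assume t: "triad x y z"
  then have "x + y - z \<in> \<nat>" "x - y + z \<in> \<nat>" "- x + y + z \<in> \<nat>" "x + y + z + 1 \<in> \<nat>"
    unfolding triad_def using triad_sum_Nats[OF t] by blast+
  then show "tri_coeff x y z \<noteq> 0"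
    unfolding tri_coeff_def by (simp only: mult_eq_0_iff fact_N_eq_0_iff inv_fact_N_eq_0_iff de_Morgan_disj not_not)
qed

lemma tri_coeff_swap_12: "tri_coeff x y z = tri_coeff y x z"
  and tri_coeff_swap_13: "tri_coeff x y z = tri_coeff z y x"
  and tri_coeff_swap_23: "tri_coeff x y z = tri_coeff x z y"
  unfolding tri_coeff_def by (simp_all add: algebra_simps)

lemma tri_coeff_succ:
  assumes "triad x y z" "triad x y (z + 1)"
  shows "tri_coeff x y z * ((x - y + z + 1) * (- x + y + z + 1))
       = tri_coeff x y (z + 1) * ((x + y - z) * (x + y + z + 2))"
proof -
  have "x + y - (z + 1) \<noteq> -1" "x - y + z \<noteq> -1" "- x + y + z \<noteq> -1"
    using triad_ge[OF assms(2)] triad_ge[OF assms(1)] by linarith+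
  from fact_N_succ[OF this(1)] fact_N_succ[OF this(2)] fact_N_succ[OF this(3)]
  have "fact_N (x + y - z) = (x + y - z) * fact_N (x + y - (z + 1))"
    and "fact_N (x - y + (z + 1)) = (x - y + z + 1) * fact_N (x - y + z)"
    and "fact_N (- x + y + (z + 1)) = (- x + y + z + 1) * fact_N (- x + y + z)"
    by (simp_all add: algebra_simps)
  moreover have "inv_fact_N (x + y + z + 1) = (x + y + z + 2) * inv_fact_N (x + y + (z + 1) + 1)"
    using inv_fact_N_succ[of "x + y + z + 1"] by (simp add: algebra_simps)
  ultimately show ?thesis
    unfolding tri_coeff_def by (simp only: mult_ac)
qed

definition racah_weight :: "real \<Rightarrow> real \<Rightarrow> real \<Rightarrow> real \<Rightarrow> real \<Rightarrow> real" where
  "racah_weight a b d e c = tri_coeff a b c * tri_coeff c d e"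

lemma racah_weight_swap: "racah_weight b a e d c = racah_weight a b d e c"
  unfolding racah_weight_def using tri_coeff_swap_12 tri_coeff_swap_23 by metis

lemma racah_weight_nonzero_iff: "racah_weight a b d e c \<noteq> 0 \<longleftrightarrow> triad a b c \<and> triad c d e"
  unfolding racah_weight_def by (simp add: tri_coeff_nonzero_iff)

lemma racah_weight_succ:
  assumes "triad a b c" "triad c d e" "triad a b (c + 1)" "triad (c + 1) d e"
  shows "racah_weight a b d e c * racah_rec_up a b c d e = racah_weight a b d e (c + 1) * racah_rec_down a b (c + 1) d e"
proof -
  have ab: "tri_coeff a b c * ((a - b + c + 1) * (- a + b + c + 1))
      = tri_coeff a b (c + 1) * ((a + b - c) * (a + b + c + 2))"
    by (rule tri_coeff_succ[OF assms(1,3)])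
  have ed: "tri_coeff e d c * ((e - d + c + 1) * (- e + d + c + 1))
      = tri_coeff e d (c + 1) * ((e + d - c) * (e + d + c + 2))"
    using assms(2,4) by (intro tri_coeff_succ) (simp_all add: triad_swap_13)
  have up: "racah_rec_up a b c d e = ((a - b + c + 1) * (- a + b + c + 1)) * ((e - d + c + 1) * (- e + d + c + 1))"
    unfolding racah_rec_up_def by (simp add: algebra_simps)
  have down: "racah_rec_down a b (c + 1) d e = ((a + b - c) * (a + b + c + 2)) * ((e + d - c) * (e + d + c + 2))"
    unfolding racah_rec_down_def by (simp add: algebra_simps)
  have "racah_weight a b d e c * racah_rec_up a b c d e
      = (tri_coeff a b c * ((a - b + c + 1) * (- a + b + c + 1))) * (tri_coeff e d c * ((e - d + c + 1) * (- e + d + c + 1)))"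
    unfolding racah_weight_def up tri_coeff_swap_13[of c d e] by (simp only: mult_ac)
  also have "\<dots> = (tri_coeff a b (c + 1) * ((a + b - c) * (a + b + c + 2))) * (tri_coeff e d (c + 1) * ((e + d - c) * (e + d + c + 2)))"
    unfolding ab ed ..
  also have "\<dots> = racah_weight a b d e (c + 1) * racah_rec_down a b (c + 1) d e"
    unfolding racah_weight_def down tri_coeff_swap_13[of "c + 1" d e] by (simp only: mult_ac)
  finally show ?thesis .
qed

section \<open>Orthogonality\<close>

definition racah_rec_diag :: "real \<Rightarrow> real \<Rightarrow> real \<Rightarrow> real \<Rightarrow> real \<Rightarrow> real" where
  "racah_rec_diag a b d e c = (2*c + 1) * (- (c*(c + 1)) + a*(a + 1) + b*(b + 1) + d*(d + 1) + e*(e + 1)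
     + (d*(d + 1) - e*(e + 1)) * (a*(a + 1) - b*(b + 1)) / (c*(c + 1)))"

text \<open>The recurrence \<open>racah_three_term_rec\<close> divided by \<open>c (c + 1)\<close>. At \<open>c = 0\<close> the divisions give \<open>0\<close>
  (\<open>x / 0 = 0\<close>), which matches \<open>racah_rec_at_zero\<close>.\<close>
definition racah_rec_op :: "real \<Rightarrow> real \<Rightarrow> real \<Rightarrow> real \<Rightarrow> (real \<Rightarrow> real) \<Rightarrow> real \<Rightarrow> real" where
  "racah_rec_op a b d e g c = racah_rec_up a b c d e / (c + 1) * g (c + 1) + racah_rec_diag a b d e c * g c
     + racah_rec_down a b c d e / c * g (c - 1)"

lemma racah_rec_op_pos:
  assumes "0 < c" "0 \<le> b + d + f"
  shows "racah_rec_op a b d e (\<lambda>x. racah a b x d e f) c = 2 * (2*c + 1) * (f*(f + 1)) * racah a b c d e f"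
proof -
  have w: "c * (c + 1) \<noteq> 0" using assms(1) by simp
  have mid: "racah_rec_mid a b c d e f = c * (c + 1) * racah_rec_diag a b d e c - 2 * (2*c + 1) * (f*(f + 1)) * (c * (c + 1))"
  proof -
    have "\<And>u z :: real. c * (c + 1) * ((2*c + 1) * (u + z / (c * (c + 1)))) = (2*c + 1) * (c * (c + 1) * u + z)"
      using w by (simp add: field_simps)
    then have "c * (c + 1) * racah_rec_diag a b d e c = (2*c + 1) * (c * (c + 1) *
        (- (c*(c + 1)) + a*(a + 1) + b*(b + 1) + d*(d + 1) + e*(e + 1)) + (d*(d + 1) - e*(e + 1)) * (a*(a + 1) - b*(b + 1)))"
      unfolding racah_rec_diag_def .
    then show ?thesis unfolding racah_rec_mid_def by (simp add: algebra_simps)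
  qed
  define R where "R = (\<lambda>x. racah a b x d e f)"
  have "c * (c + 1) * (racah_rec_up a b c d e / (c + 1) * R (c + 1)) = c * racah_rec_up a b c d e * R (c + 1)"
    and "c * (c + 1) * (racah_rec_down a b c d e / c * R (c - 1)) = (c + 1) * racah_rec_down a b c d e * R (c - 1)"
    using assms(1) by (simp_all add: field_simps)
  then have "c * (c + 1) * (racah_rec_op a b d e R c - 2 * (2*c + 1) * (f*(f + 1)) * R c)
    = c * racah_rec_up a b c d e * R (c + 1) + racah_rec_mid a b c d e f * R c
      + (c + 1) * racah_rec_down a b c d e * R (c - 1)"
    unfolding racah_rec_op_def mid by (simp only: distrib_left right_diff_distrib) (simp add: algebra_simps)
  also have "\<dots> = 0" unfolding R_def by (rule racah_three_term_rec[OF assms(2)])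
  finally show ?thesis using w unfolding R_def by simp
qed

lemma racah_rec_op_eigen:
  assumes "0 \<le> c" "0 \<le> f"
  shows "racah_weight a b d e c * racah_rec_op a b d e (\<lambda>x. racah a b x d e f) c
       = 2 * (2*c + 1) * (f*(f + 1)) * racah_weight a b d e c * racah a b c d e f"
proof (cases "racah_weight a b d e c = 0")
  case False
  then have t: "triad a b c" "triad c d e" by (simp_all add: racah_weight_nonzero_iff)
  have "racah_rec_op a b d e (\<lambda>x. racah a b x d e f) c = 2 * (2*c + 1) * (f*(f + 1)) * racah a b c d e f"
  proof (cases "c = 0")
    case True
    then have "b = a" "e = d" using t triad_zero[of a b] triad_zero[of e d] triad_swap_13[of c d e] by auto
    moreover have "0 \<le> a" "0 \<le> d" using t triad_nonneg by blast+
    moreover have "racah_rec_up a a 0 d d = 1" "racah_rec_diag a a d d 0 = 2 * (a*(a + 1)) + 2 * (d*(d + 1))"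
      by (simp_all add: racah_rec_up_def racah_rec_diag_def)
    ultimately show ?thesis
      using racah_rec_at_zero[of a d f] assms(2) unfolding True racah_rec_op_def
      by (simp add: algebra_simps)
  next
    case False
    have "0 \<le> b + d + f" using triad_nonneg(2)[OF t(1)] triad_nonneg(2)[OF t(2)] assms(2) by linarith
    with False assms(1) show ?thesis by (simp add: racah_rec_op_pos)
  qed
  then show ?thesis by simp
qed simp

lemma sum_shift_by_two:
  fixes F G :: "nat \<Rightarrow> 'a::comm_monoid_add"
  assumes "2 \<le> K" "F 0 = 0" "F 1 = 0" "G (K - 1) = 0" "G K = 0"
    and "\<And>j. j + 2 \<le> K \<Longrightarrow> F (j + 2) = G j"
  shows "(\<Sum>k\<in>{0..K}. F k) = (\<Sum>k\<in>{0..K}. G k)"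
proof -
  have "(\<Sum>k\<in>{0..K}. F k) = (\<Sum>k\<in>{0 + 2..(K - 2) + 2}. F k)"
  proof (intro sum.mono_neutral_right ballI)
    fix i assume "i \<in> {0..K} - {0 + 2..(K - 2) + 2}"
    then have "i = 0 \<or> i = 1" using assms(1) by auto
    then show "F i = 0" using assms(2,3) by auto
  qed (use assms(1) in auto)
  also have "\<dots> = (\<Sum>j\<in>{0..K - 2}. F (j + 2))"
    by (rule sum.shift_bounds_cl_nat_ivl)
  also have "\<dots> = (\<Sum>j\<in>{0..K - 2}. G j)"
    using assms(1,6) by (intro sum.cong) auto
  also have "\<dots> = (\<Sum>k\<in>{0..K}. G k)"
  proof (intro sum.mono_neutral_left ballI)
    fix i assume "i \<in> {0..K} - {0..K - 2}"
    then have "i = K - 1 \<or> i = K" by auto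
    then show "G i = 0" using assms(4,5) by auto
  qed auto
  finally show ?thesis .
qed

text \<open>The functions summed below vanish for
  \<open>x > a + b\<close>, so every \<open>K \<ge> 2 (a + b) + 2\<close> gives the full sum.\<close>
definition racah_inner :: "nat \<Rightarrow> real \<Rightarrow> real \<Rightarrow> real \<Rightarrow> real \<Rightarrow> (real \<Rightarrow> real) \<Rightarrow> (real \<Rightarrow> real) \<Rightarrow> real" where
  "racah_inner K a b d e g h =
     (\<Sum>k\<in>{0..K}. (2 * (real k / 2) + 1) * racah_weight a b d e (real k / 2) * g (real k / 2) * h (real k / 2))"

definition supported_on_triads :: "real \<Rightarrow> real \<Rightarrow> real \<Rightarrow> real \<Rightarrow> (real \<Rightarrow> real) \<Rightarrow> bool" where
  "supported_on_triads a b d e g \<longleftrightarrow> (\<forall>x. g x \<noteq> 0 \<longrightarrow> triad a b x \<and> triad x d e)"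

lemma supported_on_triads_racah: "supported_on_triads a b d e (\<lambda>x. racah a b x d e f)"
  unfolding supported_on_triads_def using racah_nonzero_imp_triads by blast

lemma racah_weight_down_up_sum:
  assumes g: "supported_on_triads a b d e g" and h: "supported_on_triads a b d e h"
    and ab: "0 \<le> a + b" and K: "2 * (a + b) + 2 \<le> real K"
  shows "(\<Sum>k\<in>{0..K}. racah_weight a b d e (real k / 2) * g (real k / 2) *
            (racah_rec_down a b (real k / 2) d e / (real k / 2) * h (real k / 2 - 1)))
       = (\<Sum>k\<in>{0..K}. racah_weight a b d e (real k / 2) * h (real k / 2) *
            (racah_rec_up a b (real k / 2) d e / (real k / 2 + 1) * g (real k / 2 + 1)))"
proof (rule sum_shift_by_two)
  have "h (- 1/2) = 0" using h triad_nonneg unfolding supported_on_triads_def by force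
  then show "racah_weight a b d e (real 1 / 2) * g (real 1 / 2) *
      (racah_rec_down a b (real 1 / 2) d e / (real 1 / 2) * h (real 1 / 2 - 1)) = 0" by simp
  have "2 \<le> real K" using ab K by argo
  then show "2 \<le> K" by simp
  have "g x = 0" if "a + b < x" for x
    using g that triad_le_add unfolding supported_on_triads_def by force
  moreover have "a + b < real (K - 1) / 2 + 1" "a + b < real K / 2 + 1"
    using K \<open>2 \<le> K\<close> by (simp_all add: of_nat_diff field_simps)
  ultimately show "racah_weight a b d e (real (K - 1) / 2) * h (real (K - 1) / 2) *
      (racah_rec_up a b (real (K - 1) / 2) d e / (real (K - 1) / 2 + 1) * g (real (K - 1) / 2 + 1)) = 0"
    and "racah_weight a b d e (real K / 2) * h (real K / 2) *
      (racah_rec_up a b (real K / 2) d e / (real K / 2 + 1) * g (real K / 2 + 1)) = 0"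
    by simp_all
next
  fix j :: nat
  define y where "y = real j / 2"
  have shift: "real (j + 2) / 2 = y + 1" by (simp add: y_def field_simps)
  show "racah_weight a b d e (real (j + 2) / 2) * g (real (j + 2) / 2) *
      (racah_rec_down a b (real (j + 2) / 2) d e / (real (j + 2) / 2) * h (real (j + 2) / 2 - 1))
    = racah_weight a b d e (real j / 2) * h (real j / 2) *
      (racah_rec_up a b (real j / 2) d e / (real j / 2 + 1) * g (real j / 2 + 1))"
  proof (cases "g (y + 1) = 0 \<or> h y = 0")
    case False
    then have "triad a b y" "triad y d e" "triad a b (y + 1)" "triad (y + 1) d e"
      using g h unfolding supported_on_triads_def by auto
    then show ?thesis
      unfolding shift y_def[symmetric] using racah_weight_succ[of a b y d e] by (simp add: ac_simps)
  qed (unfold shift y_def[symmetric], auto)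
qed simp \<comment> \<open>the \<open>k = 0\<close> term vanishes because \<open>x / 0 = 0\<close>\<close>

lemma racah_rec_op_symmetric:
  assumes g: "supported_on_triads a b d e g" and h: "supported_on_triads a b d e h"
    and ab: "0 \<le> a + b" and K: "2 * (a + b) + 2 \<le> real K"
  shows "(\<Sum>k\<in>{0..K}. racah_weight a b d e (real k / 2) * g (real k / 2) * racah_rec_op a b d e h (real k / 2))
       = (\<Sum>k\<in>{0..K}. racah_weight a b d e (real k / 2) * h (real k / 2) * racah_rec_op a b d e g (real k / 2))"
proof -
  have split: "(\<Sum>k\<in>{0..K}. racah_weight a b d e (real k / 2) * u (real k / 2) * racah_rec_op a b d e v (real k / 2))
    = (\<Sum>k\<in>{0..K}. racah_weight a b d e (real k / 2) * u (real k / 2) *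
         (racah_rec_up a b (real k / 2) d e / (real k / 2 + 1) * v (real k / 2 + 1)))
    + (\<Sum>k\<in>{0..K}. racah_weight a b d e (real k / 2) * u (real k / 2) * (racah_rec_diag a b d e (real k / 2) * v (real k / 2)))
    + (\<Sum>k\<in>{0..K}. racah_weight a b d e (real k / 2) * u (real k / 2) *
         (racah_rec_down a b (real k / 2) d e / (real k / 2) * v (real k / 2 - 1)))" for u v
    unfolding racah_rec_op_def by (simp only: distrib_left sum.distrib)
  show ?thesis
    unfolding split racah_weight_down_up_sum[OF g h ab K] racah_weight_down_up_sum[OF h g ab K]
    by (simp add: ac_simps)
qed

lemma racah_orthogonal:
  assumes f: "0 \<le> f" and ff': "f \<noteq> f'" and ab: "0 \<le> a + b" and K: "2 * (a + b) + 2 \<le> real K"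
  shows "racah_inner K a b d e (\<lambda>x. racah a b x d e f) (\<lambda>x. racah a b x d e f') = 0"
proof (cases "0 \<le> f'")
  case False
  then have "racah a b x d e f' = 0" for x
    using racah_nonzero_imp_triads triad_nonneg(3) by fastforce
  then show ?thesis by (simp add: racah_inner_def)
next
  case True
  define R where "R f = (\<lambda>x. racah a b x d e f)" for f
  have eigen_sum: "(\<Sum>k\<in>{0..K}. racah_weight a b d e (real k / 2) * R f2 (real k / 2) * racah_rec_op a b d e (R f1) (real k / 2))
      = 2 * (f1 * (f1 + 1)) * racah_inner K a b d e (R f1) (R f2)" if "0 \<le> f1" for f1 f2
    unfolding racah_inner_def sum_distrib_left
  proof (rule sum.cong[OF refl])
    fix k :: nat
    have "racah_weight a b d e (real k / 2) * racah_rec_op a b d e (R f1) (real k / 2)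
      = 2 * (2 * (real k / 2) + 1) * (f1 * (f1 + 1)) * racah_weight a b d e (real k / 2) * R f1 (real k / 2)"
      unfolding R_def by (rule racah_rec_op_eigen) (simp_all add: that)
    then have "R f2 (real k / 2) * (racah_weight a b d e (real k / 2) * racah_rec_op a b d e (R f1) (real k / 2))
      = R f2 (real k / 2) * (2 * (2 * (real k / 2) + 1) * (f1 * (f1 + 1)) * racah_weight a b d e (real k / 2) * R f1 (real k / 2))"
      by (rule arg_cong)
    then show "racah_weight a b d e (real k / 2) * R f2 (real k / 2) * racah_rec_op a b d e (R f1) (real k / 2)
      = 2 * (f1 * (f1 + 1)) * ((2 * (real k / 2) + 1) * racah_weight a b d e (real k / 2) * R f1 (real k / 2) * R f2 (real k / 2))"
      by (simp only: mult_ac)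
  qed
  have "2 * (f * (f + 1)) * racah_inner K a b d e (R f) (R f') = 2 * (f' * (f' + 1)) * racah_inner K a b d e (R f') (R f)"
    unfolding eigen_sum[OF f, symmetric] eigen_sum[OF True, symmetric] unfolding R_def
    by (rule racah_rec_op_symmetric[OF supported_on_triads_racah supported_on_triads_racah ab K])
  moreover have "racah_inner K a b d e (R f') (R f) = racah_inner K a b d e (R f) (R f')"
    unfolding racah_inner_def by (simp add: ac_simps)
  moreover have "f * (f + 1) \<noteq> f' * (f' + 1)"
  proof
    assume "f * (f + 1) = f' * (f' + 1)"
    then have "(f - f') * (f + f' + 1) = 0" by (simp add: algebra_simps)
    then show False using f True ff' by simp
  qed
  ultimately show ?thesis unfolding R_def by simp
qed

section \<open>Normalization\<close>

lemma racah_dual_rec: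
  assumes "0 \<le> x" "0 \<le> f" "triad b d f" "triad a e f"
  shows "racah_rec_op d b a e (\<lambda>y. racah a b x d e y) f = 2 * (2*f + 1) * (x * (x + 1)) * racah a b x d e f"
proof -
  have swap: "racah d b y a e x = racah a b x d e y" for y
    by (rule racah_swap_ad_cf)
  have "racah_weight d b a e f \<noteq> 0"
    using assms(3,4) triad_swap_12[of b d f] triad_rotate[of a e f] by (simp add: racah_weight_nonzero_iff)
  moreover have "racah_weight d b a e f * racah_rec_op d b a e (\<lambda>y. racah a b x d e y) f
      = racah_weight d b a e f * (2 * (2*f + 1) * (x * (x + 1)) * racah a b x d e f)"
    using racah_rec_op_eigen[OF assms(2,1), of d b a e] unfolding swap by (simp only: mult_ac)
  ultimately show ?thesis by simp
qed

lemma racah_inner_dual_rec: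
  assumes "0 \<le> f" "triad b d f" "triad a e f"
  defines "R \<equiv> \<lambda>f x. racah a b x d e f"
  shows "racah_rec_up d b f a e / (f + 1) * racah_inner K a b d e g (R (f + 1))
       + racah_rec_diag d b a e f * racah_inner K a b d e g (R f)
       + racah_rec_down d b f a e / f * racah_inner K a b d e g (R (f - 1))
     = 2 * (2*f + 1) * racah_inner K a b d e g (\<lambda>x. x * (x + 1) * R f x)"
proof -
  have pointwise: "racah_rec_up d b f a e / (f + 1) * R (f + 1) x + racah_rec_diag d b a e f * R f x
      + racah_rec_down d b f a e / f * R (f - 1) x = 2 * (2*f + 1) * (x * (x + 1) * R f x)" if "0 \<le> x" for x
    using racah_dual_rec[OF that assms(1-3)] unfolding racah_rec_op_def R_def by (simp add: ac_simps)
  let ?w = "\<lambda>k. (2 * (real k / 2) + 1) * racah_weight a b d e (real k / 2) * g (real k / 2)"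
  have "racah_rec_up d b f a e / (f + 1) * racah_inner K a b d e g (R (f + 1))
       + racah_rec_diag d b a e f * racah_inner K a b d e g (R f)
       + racah_rec_down d b f a e / f * racah_inner K a b d e g (R (f - 1))
     = (\<Sum>k\<in>{0..K}. racah_rec_up d b f a e / (f + 1) * (?w k * R (f + 1) (real k / 2))
         + racah_rec_diag d b a e f * (?w k * R f (real k / 2))
         + racah_rec_down d b f a e / f * (?w k * R (f - 1) (real k / 2)))"
    unfolding racah_inner_def by (simp only: sum_distrib_left sum.distrib)
  also have "\<dots> = (\<Sum>k\<in>{0..K}. ?w k * (2 * (2*f + 1) * (real k / 2 * (real k / 2 + 1) * R f (real k / 2))))"
  proof (rule sum.cong[OF refl])
    fix k :: nat
    have "racah_rec_up d b f a e / (f + 1) * (?w k * R (f + 1) (real k / 2))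
         + racah_rec_diag d b a e f * (?w k * R f (real k / 2))
         + racah_rec_down d b f a e / f * (?w k * R (f - 1) (real k / 2))
      = ?w k * (racah_rec_up d b f a e / (f + 1) * R (f + 1) (real k / 2) + racah_rec_diag d b a e f * R f (real k / 2)
         + racah_rec_down d b f a e / f * R (f - 1) (real k / 2))"
      by (simp only: distrib_left mult.left_commute)
    also have "\<dots> = ?w k * (2 * (2*f + 1) * (real k / 2 * (real k / 2 + 1) * R f (real k / 2)))"
      by (subst pointwise) simp_all
    finally show "racah_rec_up d b f a e / (f + 1) * (?w k * R (f + 1) (real k / 2))
         + racah_rec_diag d b a e f * (?w k * R f (real k / 2))
         + racah_rec_down d b f a e / f * (?w k * R (f - 1) (real k / 2))
      = ?w k * (2 * (2*f + 1) * (real k / 2 * (real k / 2 + 1) * R f (real k / 2)))" .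
  qed
  also have "\<dots> = 2 * (2*f + 1) * racah_inner K a b d e g (\<lambda>x. x * (x + 1) * R f x)"
    unfolding racah_inner_def sum_distrib_left by (simp only: mult_ac)
  finally show ?thesis .
qed

lemma racah_weight_dual: "racah_weight d b a e f = tri_coeff b d f * tri_coeff a e f"
  unfolding racah_weight_def by (metis tri_coeff_swap_12 tri_coeff_swap_13)

definition racah_norm :: "nat \<Rightarrow> real \<Rightarrow> real \<Rightarrow> real \<Rightarrow> real \<Rightarrow> real \<Rightarrow> real" where
  "racah_norm K a b d e f = (2*f + 1) * (tri_coeff b d f * tri_coeff a e f) *
     racah_inner K a b d e (\<lambda>x. racah a b x d e f) (\<lambda>x. racah a b x d e f)"

text \<open>Pairing the recurrence in \<open>f\<close> at \<open>f\<close> with \<open>racah (f + 1)\<close>, and at \<open>f + 1\<close> with \<open>racah f\<close>,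
  gives by orthogonality two expressions for the same mixed moment.\<close>
lemma racah_mixed_moment:
  assumes f: "0 \<le> f" and t: "triad b d f" "triad a e f" "triad b d (f + 1)" "triad a e (f + 1)"
    and K: "2 * (a + b) + 2 \<le> real K"
  defines "R \<equiv> \<lambda>f x. racah a b x d e f"
  defines "L \<equiv> racah_inner K a b d e (R f) (\<lambda>x. x * (x + 1) * R (f + 1) x)"
  shows "racah_rec_up d b f a e * racah_inner K a b d e (R (f + 1)) (R (f + 1)) = 2 * (2*f + 1) * (f + 1) * L"
    and "racah_rec_down d b (f + 1) a e * racah_inner K a b d e (R f) (R f) = 2 * (2*f + 3) * (f + 1) * L"
proof -
  have ab: "0 \<le> a + b" using triad_nonneg[OF t(1)] triad_nonneg[OF t(2)] by simp
  have orth: "racah_inner K a b d e (R f1) (R f2) = 0" if "0 \<le> f1" "f1 \<noteq> f2" for f1 f2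
    unfolding R_def by (rule racah_orthogonal[OF that ab K])
  have "racah_inner K a b d e (R (f + 1)) (\<lambda>x. x * (x + 1) * R f x) = L"
    unfolding L_def racah_inner_def by (simp only: mult_ac)
  with racah_inner_dual_rec[OF f t(1,2), of K "R (f + 1)"] orth[of "f + 1" f] orth[of "f + 1" "f - 1"] f
  have "racah_rec_up d b f a e / (f + 1) * racah_inner K a b d e (R (f + 1)) (R (f + 1)) = 2 * (2*f + 1) * L"
    unfolding R_def by simp
  then show "racah_rec_up d b f a e * racah_inner K a b d e (R (f + 1)) (R (f + 1)) = 2 * (2*f + 1) * (f + 1) * L"
    using f by (simp add: field_simps)
  from racah_inner_dual_rec[of "f + 1", OF _ t(3,4), of K "R f"] orth[OF f, of "f + 1 + 1"] orth[OF f, of "f + 1"] f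
  have "racah_rec_down d b (f + 1) a e / (f + 1) * racah_inner K a b d e (R f) (R f) = 2 * (2*f + 3) * L"
    unfolding L_def R_def by (simp add: algebra_simps)
  then show "racah_rec_down d b (f + 1) a e * racah_inner K a b d e (R f) (R f) = 2 * (2*f + 3) * (f + 1) * L"
    using f by (simp add: field_simps)
qed

lemma racah_norm_succ:
  assumes f: "0 \<le> f" and t: "triad b d f" "triad a e f" "triad b d (f + 1)" "triad a e (f + 1)"
    and K: "2 * (a + b) + 2 \<le> real K"
  shows "racah_norm K a b d e (f + 1) = racah_norm K a b d e f"
proof -
  define N0 N1 W0 W1 U D where "N0 = racah_inner K a b d e (\<lambda>x. racah a b x d e f) (\<lambda>x. racah a b x d e f)"
    and "N1 = racah_inner K a b d e (\<lambda>x. racah a b x d e (f + 1)) (\<lambda>x. racah a b x d e (f + 1))"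
    and "W0 = tri_coeff b d f * tri_coeff a e f" and "W1 = tri_coeff b d (f + 1) * tri_coeff a e (f + 1)"
    and "U = racah_rec_up d b f a e" and "D = racah_rec_down d b (f + 1) a e"
  note moments = racah_mixed_moment[OF assms, folded N0_def N1_def U_def D_def]
  have W: "W0 * U = W1 * D"
    using racah_weight_succ[of d b f a e] t triad_swap_12[of b d] triad_rotate[of a e]
    unfolding racah_weight_dual W0_def W1_def U_def D_def by simp
  have "0 < D"
    using triad_le_add[OF t(3)] triad_le_add[OF t(4)] f unfolding D_def racah_rec_down_def
    by (simp add: mult_pos_pos)
  moreover have "D * ((2*f + 3) * W1 * N1) = D * ((2*f + 1) * W0 * N0)"
  proof -
    have "D * ((2*f + 3) * W1 * N1) = (2*f + 3) * (W1 * D) * N1"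
      by (simp only: mult_ac)
    also have "\<dots> = (2*f + 3) * W0 * (U * N1)"
      unfolding W[symmetric] by (simp only: mult_ac)
    also have "\<dots> = (2*f + 1) * W0 * (D * N0)"
      unfolding moments by (simp only: mult_ac)
    finally show ?thesis by (simp only: mult_ac)
  qed
  ultimately have "(2*f + 3) * W1 * N1 = (2*f + 1) * W0 * N0"
    by simp
  moreover have "2 * (f + 1) + 1 = 2*f + 3" by simp
  ultimately show ?thesis
    unfolding racah_norm_def N0_def N1_def W0_def W1_def by (simp only:)
qed

text \<open>At \<open>f = b + d\<close> the Racah sum has a single term, and \<open>racah_norm\<close> becomes a multiple of
  \<open>\<Sum>x. top_summand a b d e x\<close>. This sum equals \<open>top_value a b d e\<close>: both sides satisfy the same
  first-order recurrence under \<open>(a, b) \<mapsto> (a + 1/2, b + 1/2)\<close> (a WZ pair with antidifference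
  \<open>top_antidiff\<close>), and agree when \<open>b = 0\<close> or \<open>a + b = e - d\<close>, where the sum has a single term.\<close>
definition top_summand :: "real \<Rightarrow> real \<Rightarrow> real \<Rightarrow> real \<Rightarrow> real \<Rightarrow> real" where
  "top_summand a b d e x = (2*x + 1) * fact_N (a - b + x) * fact_N (x - d + e) *
     inv_fact_N (a + b + x + 1) * inv_fact_N (x + d + e + 1) * inv_fact_N (d + e - x) *
     inv_fact_N (a + b - x) * inv_fact_N (x + d - e) * inv_fact_N (x + b - a)"

definition top_value :: "real \<Rightarrow> real \<Rightarrow> real \<Rightarrow> real \<Rightarrow> real" where
  "top_value a b d e = fact_N (a + e - b - d) * fact_N (2*b + 2*d) * inv_fact_N (2*b) * inv_fact_N (2*d) *
     inv_fact_N (a + b + d - e) * inv_fact_N (b + d + e - a) * inv_fact_N (a + b + d + e + 1)"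

definition top_antidiff :: "real \<Rightarrow> real \<Rightarrow> real \<Rightarrow> real \<Rightarrow> real \<Rightarrow> real" where
  "top_antidiff a b d e x = - (fact_N (a - b + x) * fact_N (x - d + e) * inv_fact_N (x + b - a - 1) *
     inv_fact_N (x + d - e - 1) * inv_fact_N (a + b + 1 - x) * inv_fact_N (a + b + x + 1) *
     inv_fact_N (d + e - x) * inv_fact_N (d + e + x))"

lemma top_wz_identity:
  fixes a b d e x :: real
  shows "(2*b + 1) * (a + b + d - e + 1) * (a + b + d + e + 2) * (2*x + 1)
       - (2*b + 2*d + 1) * ((2*x + 1) * (a + b + x + 2) * (a + b - x + 1))
     = - (a - b + x + 1) * (x - d + e + 1) * (a + b - x + 1) * (d + e - x)
       + (x + b - a) * (x + d - e) * (a + b + x + 2) * (x + d + e + 1)"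
  by algebra

lemma top_wz_pointwise_regular:
  assumes n1: "a - b + x \<noteq> -1" and n2: "x - d + e \<noteq> -1"
  shows "(2*b + 1) * (a + b + d - e + 1) * (a + b + d + e + 2) * top_summand (a + 1/2) (b + 1/2) d e x
       - (2*b + 2*d + 1) * top_summand a b d e x
     = top_antidiff a b d e (x + 1) - top_antidiff a b d e x"
proof -
  define K where "K = fact_N (a - b + x) * fact_N (x - d + e) * inv_fact_N (x + b - a) * inv_fact_N (x + d - e) *
     inv_fact_N (a + b + 1 - x) * inv_fact_N (a + b + x + 2) * inv_fact_N (d + e - x) * inv_fact_N (x + d + e + 1)"
  have r1: "inv_fact_N (a + b + x + 1) = (a + b + x + 2) * inv_fact_N (a + b + x + 2)"
    and r2: "inv_fact_N (a + b - x) = (a + b - x + 1) * inv_fact_N (a + b + 1 - x)"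
    and r5: "inv_fact_N (d + e + x) = (x + d + e + 1) * inv_fact_N (x + d + e + 1)"
    by (rule inv_fact_N_pred; simp)+
  have r3: "inv_fact_N (x + b - a - 1) = (x + b - a) * inv_fact_N (x + b - a)"
    and r4: "inv_fact_N (x + d - e - 1) = (x + d - e) * inv_fact_N (x + d - e)"
    by (rule inv_fact_N_pred; simp)+
  have F0: "top_summand a b d e x = K * ((2*x + 1) * (a + b + x + 2) * (a + b - x + 1))"
    unfolding top_summand_def r1 r2 K_def by (simp only: mult_ac)
  have F1: "top_summand (a + 1/2) (b + 1/2) d e x = K * (2*x + 1)"
  proof -
    have "top_summand (a + 1/2) (b + 1/2) d e x = (2*x + 1) * fact_N (a - b + x) * fact_N (x - d + e) *
        inv_fact_N (a + b + x + 2) * inv_fact_N (x + d + e + 1) * inv_fact_N (d + e - x) *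
        inv_fact_N (a + b + 1 - x) * inv_fact_N (x + d - e) * inv_fact_N (x + b - a)"
      unfolding top_summand_def by (simp add: algebra_simps)
    then show ?thesis unfolding K_def by (simp only: mult_ac)
  qed
  have G0: "top_antidiff a b d e x = - (K * ((x + b - a) * (x + d - e) * (a + b + x + 2) * (x + d + e + 1)))"
    unfolding top_antidiff_def r1 r3 r4 r5 K_def by (simp only: mult_ac)
  have "fact_N (a - b + (x + 1)) = (a - b + x + 1) * fact_N (a - b + x)"
    and "fact_N (x + 1 - d + e) = (x - d + e + 1) * fact_N (x - d + e)"
    using fact_N_succ[OF n1] fact_N_succ[OF n2] by (simp_all add: algebra_simps)
  moreover have "inv_fact_N (a + b + 1 - (x + 1)) = (a + b - x + 1) * inv_fact_N (a + b + 1 - x)"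
    and "inv_fact_N (d + e - (x + 1)) = (d + e - x) * inv_fact_N (d + e - x)"
    by (rule inv_fact_N_pred; simp)+
  moreover have "inv_fact_N (x + 1 + b - a - 1) = inv_fact_N (x + b - a)"
    and "inv_fact_N (x + 1 + d - e - 1) = inv_fact_N (x + d - e)"
    and "inv_fact_N (a + b + (x + 1) + 1) = inv_fact_N (a + b + x + 2)"
    and "inv_fact_N (d + e + (x + 1)) = inv_fact_N (x + d + e + 1)"
    by (rule arg_cong[where f = inv_fact_N]; simp)+
  ultimately have G1: "top_antidiff a b d e (x + 1) = - (K * ((a - b + x + 1) * (x - d + e + 1) * (a + b - x + 1) * (d + e - x)))"
    unfolding top_antidiff_def K_def by (simp only: mult_ac)
  have factor_K: "\<And>c1 c0 u v :: real. c1 * (K * u) - c0 * (K * v) = K * (c1 * u - c0 * v)"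
    "\<And>u v :: real. - (K * u) - - (K * v) = K * (- u + v)"
    by (simp_all add: algebra_simps)
  show ?thesis
    unfolding F0 F1 G0 G1 factor_K top_wz_identity by (simp only: mult_minus_left)
qed

lemma top_wz_pointwise:
  assumes st: "0 \<le> a - b + e - d"
  shows "(2*b + 1) * (a + b + d - e + 1) * (a + b + d + e + 2) * top_summand (a + 1/2) (b + 1/2) d e x
       - (2*b + 2*d + 1) * top_summand a b d e x
     = top_antidiff a b d e (x + 1) - top_antidiff a b d e x"
proof (cases "a - b + x = -1 \<or> x - d + e = -1")
  case True
  then have "top_summand (a + 1/2) (b + 1/2) d e x = 0" "top_summand a b d e x = 0" "top_antidiff a b d e x = 0"
    unfolding top_summand_def top_antidiff_def by (auto simp: fact_N_neg algebra_simps)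
  moreover have "x + 1 + d - e - 1 < 0 \<or> x + 1 + b - a - 1 < 0"
    using True st by linarith
  then have "top_antidiff a b d e (x + 1) = 0"
    unfolding top_antidiff_def by (auto simp: inv_fact_N_neg)
  ultimately show ?thesis by simp
qed (simp add: top_wz_pointwise_regular)

lemma top_antidiff_vanishes:
  assumes "0 \<le> a - b + e - d" and "x \<le> 1/2 \<or> a + b + 1 < x"
  shows "top_antidiff a b d e x = 0"
proof -
  have "x + b - a - 1 < 0 \<or> x + d - e - 1 < 0 \<or> a + b + 1 - x < 0"
    using assms by linarith
  then show ?thesis unfolding top_antidiff_def by (auto simp: inv_fact_N_neg)
qed

lemma sum_telescope_two:
  fixes g :: "nat \<Rightarrow> 'a::ab_group_add"
  shows "(\<Sum>k\<in>{0..K}. g (k + 2) - g k) = g (K + 1) + g (K + 2) - g 0 - g 1"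
  by (induction K) (simp_all add: algebra_simps)

lemma top_sum_step:
  assumes st: "0 \<le> a - b + e - d" and K: "2 * (a + b) + 3 \<le> real K"
  shows "(2*b + 1) * (a + b + d - e + 1) * (a + b + d + e + 2) * (\<Sum>k\<in>{0..K}. top_summand (a + 1/2) (b + 1/2) d e (real k / 2))
       = (2*b + 2*d + 1) * (\<Sum>k\<in>{0..K}. top_summand a b d e (real k / 2))"
proof -
  define g where "g = (\<lambda>k::nat. top_antidiff a b d e (real k / 2))"
  have "(2*b + 1) * (a + b + d - e + 1) * (a + b + d + e + 2) * (\<Sum>k\<in>{0..K}. top_summand (a + 1/2) (b + 1/2) d e (real k / 2))
       - (2*b + 2*d + 1) * (\<Sum>k\<in>{0..K}. top_summand a b d e (real k / 2))
       = (\<Sum>k\<in>{0..K}. (2*b + 1) * (a + b + d - e + 1) * (a + b + d + e + 2) * top_summand (a + 1/2) (b + 1/2) d e (real k / 2)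
            - (2*b + 2*d + 1) * top_summand a b d e (real k / 2))"
    by (simp add: sum_distrib_left sum_subtractf)
  also have "\<dots> = (\<Sum>k\<in>{0..K}. g (k + 2) - g k)"
  proof (rule sum.cong[OF refl])
    fix k :: nat
    have "g (k + 2) = top_antidiff a b d e (real k / 2 + 1)"
      unfolding g_def by (rule arg_cong[where f = "top_antidiff a b d e"]) simp
    then show "(2*b + 1) * (a + b + d - e + 1) * (a + b + d + e + 2) * top_summand (a + 1/2) (b + 1/2) d e (real k / 2)
        - (2*b + 2*d + 1) * top_summand a b d e (real k / 2) = g (k + 2) - g k"
      using top_wz_pointwise[OF st, of "real k / 2"] by (simp add: g_def)
  qed
  also have "\<dots> = g (K + 1) + g (K + 2) - g 0 - g 1"
    by (rule sum_telescope_two)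
  also have "\<dots> = 0"
    using K top_antidiff_vanishes[OF st] by (simp add: g_def)
  finally show ?thesis by simp
qed

lemma top_value_step:
  assumes "0 \<le> b" "0 \<le> d"
  shows "(2*b + 1) * (a + b + d - e + 1) * (a + b + d + e + 2) * top_value (a + 1/2) (b + 1/2) d e
       = (2*b + 2*d + 1) * top_value a b d e"
proof -
  have "2*b + 2*d \<noteq> -1" using assms by simp
  from fact_N_succ[OF this] have "fact_N (2 * (b + 1/2) + 2*d) = (2*b + 2*d + 1) * fact_N (2*b + 2*d)"
    by (simp add: algebra_simps)
  moreover have "inv_fact_N (2*b) = (2*b + 1) * inv_fact_N (2 * (b + 1/2))"
    and "inv_fact_N (a + b + d - e) = (a + b + d - e + 1) * inv_fact_N ((a + 1/2) + (b + 1/2) + d - e)"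
    and "inv_fact_N (a + b + d + e + 1) = (a + b + d + e + 2) * inv_fact_N ((a + 1/2) + (b + 1/2) + d + e + 1)"
    by (rule inv_fact_N_pred; simp)+
  moreover have "fact_N ((a + 1/2) + e - (b + 1/2) - d) = fact_N (a + e - b - d)"
    and "inv_fact_N ((b + 1/2) + d + e - (a + 1/2)) = inv_fact_N (b + d + e - a)"
    by (simp_all add: algebra_simps)
  ultimately show ?thesis unfolding top_value_def by (simp only: mult_ac)
qed

lemma top_sum_induct:
  assumes nn: "0 \<le> a" "0 \<le> b" "0 \<le> d" "0 \<le> e" and st: "0 \<le> a - b + e - d" and cond: "0 \<le> a + b + d - e"
    and base: "(\<Sum>k\<in>{0..K}. top_summand a b d e (real k / 2)) = top_value a b d e"
    and K: "2 * (a + b + real j) + 3 \<le> real K"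
  shows "(\<Sum>k\<in>{0..K}. top_summand (a + real j / 2) (b + real j / 2) d e (real k / 2))
       = top_value (a + real j / 2) (b + real j / 2) d e"
  using K
proof (induction j)
  case (Suc j)
  define a' where "a' = a + real j / 2"
  define b' where "b' = b + real j / 2"
  have IH: "(\<Sum>k\<in>{0..K}. top_summand a' b' d e (real k / 2)) = top_value a' b' d e"
    unfolding a'_def b'_def using Suc by simp
  have "2*b' + 1 \<noteq> 0" "a' + b' + d - e + 1 \<noteq> 0" "a' + b' + d + e + 2 \<noteq> 0"
    using nn cond by (simp_all add: a'_def b'_def)
  moreover have "(2*b' + 1) * (a' + b' + d - e + 1) * (a' + b' + d + e + 2) * (\<Sum>k\<in>{0..K}. top_summand (a' + 1/2) (b' + 1/2) d e (real k / 2))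
      = (2*b' + 1) * (a' + b' + d - e + 1) * (a' + b' + d + e + 2) * top_value (a' + 1/2) (b' + 1/2) d e"
  proof -
    have "0 \<le> a' - b' + e - d" "2 * (a' + b') + 3 \<le> real K"
      using st Suc.prems by (simp_all add: a'_def b'_def)
    from top_sum_step[OF this] IH top_value_step[of b' d a' e] nn show ?thesis
      by (simp add: b'_def)
  qed
  moreover have "a + real (Suc j) / 2 = a' + 1/2" "b + real (Suc j) / 2 = b' + 1/2"
    by (simp_all add: a'_def b'_def field_simps)
  ultimately show ?case by simp
qed (use base in simp)

lemma top_summand_nonzero_imp:
  assumes "top_summand a b d e x \<noteq> 0"
  shows "0 \<le> x + b - a" "0 \<le> a + b - x" "0 \<le> x + d - e"
proof -
  have "x + b - a \<in> \<nat>" "a + b - x \<in> \<nat>" "x + d - e \<in> \<nat>"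
    using assms unfolding top_summand_def by (auto simp: inv_fact_N_eq_0_iff)
  then show "0 \<le> x + b - a" "0 \<le> a + b - x" "0 \<le> x + d - e"
    using Nats_nonneg by blast+
qed

lemma sum_half_single:
  fixes g :: "real \<Rightarrow> 'a::comm_monoid_add"
  assumes "m \<le> K" and "\<And>k. k \<noteq> m \<Longrightarrow> g (real k / 2) = 0"
  shows "(\<Sum>k\<in>{0..K}. g (real k / 2)) = g (real m / 2)"
proof -
  have "(\<Sum>k\<in>{0..K}. g (real k / 2)) = (\<Sum>k\<in>{m}. g (real k / 2))"
    using assms by (intro sum.mono_neutral_right) auto
  then show ?thesis by simp
qed

lemma top_sum_b_zero:
  assumes s: "2 * s = real m" and d: "2 * d \<in> \<nat>" and K: "m \<le> K"
  shows "(\<Sum>k\<in>{0..K}. top_summand s 0 d e (real k / 2)) = top_value s 0 d e"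
proof -
  have "(\<Sum>k\<in>{0..K}. top_summand s 0 d e (real k / 2)) = top_summand s 0 d e (real m / 2)"
  proof (rule sum_half_single[OF K])
    fix k assume "k \<noteq> m"
    then show "top_summand s 0 d e (real k / 2) = 0"
      using top_summand_nonzero_imp[of s 0 d e "real k / 2"] s by force
  qed
  also have "real m / 2 = s" using s by simp
  also have "top_summand s 0 d e s = top_value s 0 d e"
  proof -
    have "top_summand s 0 d e s = ((2*s + 1) * fact_N (2*s) * inv_fact_N (2*s + 1)) *
        fact_N (s + e - d) * inv_fact_N (s + d + e + 1) * inv_fact_N (d + e - s) * inv_fact_N (s + d - e)"
      unfolding top_summand_def by (simp add: algebra_simps)
    moreover have "top_value s 0 d e = (fact_N (2*d) * inv_fact_N (2*d)) *
        fact_N (s + e - d) * inv_fact_N (s + d + e + 1) * inv_fact_N (d + e - s) * inv_fact_N (s + d - e)"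
      unfolding top_value_def by (simp add: algebra_simps)
    moreover have "2 * s \<in> \<nat>" using s by simp
    ultimately show ?thesis
      using fact_N_mult_inv_fact_N_succ fact_N_mult_inv_fact_N[OF d] by simp
  qed
  finally show ?thesis .
qed

lemma top_sum_min:
  assumes ab: "a + b = e - d" and m: "2 * (e - d) = real m" and bd: "2*b + 2*d \<in> \<nat>" and K: "m \<le> K"
  shows "(\<Sum>k\<in>{0..K}. top_summand a b d e (real k / 2)) = top_value a b d e"
proof -
  have "(\<Sum>k\<in>{0..K}. top_summand a b d e (real k / 2)) = top_summand a b d e (real m / 2)"
  proof (rule sum_half_single[OF K])
    fix k assume "k \<noteq> m"
    then show "top_summand a b d e (real k / 2) = 0"
      using top_summand_nonzero_imp[of a b d e "real k / 2"] ab m by force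
  qed
  also have "real m / 2 = e - d" using m by simp
  also have "top_summand a b d e (e - d) = top_value a b d e"
  proof -
    have a: "a = e - d - b" using ab by simp
    have "top_summand a b d e (e - d) = ((2*(e - d) + 1) * fact_N (2*(e - d)) * inv_fact_N (2*(e - d) + 1)) *
        fact_N (2*e - 2*d - 2*b) * inv_fact_N (2*e + 1) * inv_fact_N (2*d) * inv_fact_N (2*b)"
      unfolding top_summand_def a by (simp add: algebra_simps)
    moreover have "top_value a b d e = (fact_N (2*b + 2*d) * inv_fact_N (2*b + 2*d)) *
        fact_N (2*e - 2*d - 2*b) * inv_fact_N (2*e + 1) * inv_fact_N (2*d) * inv_fact_N (2*b)"
      unfolding top_value_def a by (simp add: algebra_simps)
    moreover have "2 * (e - d) \<in> \<nat>" using m by simp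
    ultimately show ?thesis
      using fact_N_mult_inv_fact_N_succ fact_N_mult_inv_fact_N[OF bd] by simp
  qed
  finally show ?thesis .
qed

lemma top_sum_eq_top_value:
  assumes nn: "0 \<le> a" "0 \<le> b" "0 \<le> d" "0 \<le> e"
    and half: "2*a \<in> \<nat>" "2*b \<in> \<nat>" "2*d \<in> \<nat>" "2*e \<in> \<nat>"
    and st: "0 \<le> a - b + e - d" and c1: "a + b + d - e \<in> \<nat>" and c2: "b + d + e - a \<in> \<nat>"
    and K: "2 * (a + b) + 3 \<le> real K"
  shows "(\<Sum>k\<in>{0..K}. top_summand a b d e (real k / 2)) = top_value a b d e"
proof (cases "e - d \<le> a - b")
  case True
  have "2*a - 2*b \<in> \<nat>" using Nats_diff[OF half(1,2)] True st by simp
  then obtain m where m: "2 * (a - b) = real m" by (auto simp: Nats_iff_of_nat algebra_simps)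
  obtain j where j: "2*b = real j" using half(2) by (auto simp: Nats_iff_of_nat)
  have "m \<le> K" using m K nn by simp
  then have base: "(\<Sum>k\<in>{0..K}. top_summand (a - b) 0 d e (real k / 2)) = top_value (a - b) 0 d e"
    using top_sum_b_zero[OF m half(3)] by simp
  have "(\<Sum>k\<in>{0..K}. top_summand (a - b + real j / 2) (0 + real j / 2) d e (real k / 2))
      = top_value (a - b + real j / 2) (0 + real j / 2) d e"
    by (rule top_sum_induct[OF _ _ nn(3,4) _ _ base]) (use st True K j in simp_all)
  moreover have "a - b + real j / 2 = a" "0 + real j / 2 = b" using j by simp_all
  ultimately show ?thesis by simp
next
  case False
  define a0 where "a0 = (e - d + a - b) / 2"
  define b0 where "b0 = (e - d - a + b) / 2"
  obtain j where j: "a + b + d - e = real j" using c1 by (auto simp: Nats_iff_of_nat)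
  have "2*e - 2*d \<in> \<nat>" using Nats_diff[OF half(4,3)] False st by simp
  then obtain m where m: "2 * (e - d) = real m" by (auto simp: Nats_iff_of_nat algebra_simps)
  have "real m \<le> real K" using m j K of_nat_0_le_iff[of j, where 'a = real] by argo
  then have mK: "m \<le> K" by simp
  have "2*b0 + 2*d = b + d + e - a" by (simp add: b0_def field_simps)
  with c2 have bd: "2*b0 + 2*d \<in> \<nat>" by (simp only:)
  have base: "(\<Sum>k\<in>{0..K}. top_summand a0 b0 d e (real k / 2)) = top_value a0 b0 d e"
    by (rule top_sum_min[OF _ m bd mK]) (simp add: a0_def b0_def field_simps)
  have "0 \<le> a0" "0 \<le> b0" using st False by (simp_all add: a0_def b0_def)
  then have "(\<Sum>k\<in>{0..K}. top_summand (a0 + real j / 2) (b0 + real j / 2) d e (real k / 2))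
      = top_value (a0 + real j / 2) (b0 + real j / 2) d e"
    by (rule top_sum_induct[OF _ _ nn(3,4) _ _ base]) (use st K j in \<open>simp_all add: a0_def b0_def field_simps\<close>)
  moreover have "a0 + real j / 2 = a" "b0 + real j / 2 = b" using j by (simp_all add: a0_def b0_def field_simps)
  ultimately show ?thesis by simp
qed

lemma racah_top_single_term:
  assumes N: "real_of_int N = a + b + d + e" "-1 \<le> N"
  shows "racah a b x d e (b + d) = racah_term a b x d e (b + d) N"
proof -
  have "\<lceil>a + b + d + e\<rceil> = N" using N(1) by (metis ceiling_of_int)
  then have "racah a b x d e (b + d) = (\<Sum>n\<in>{-1..N}. racah_term a b x d e (b + d) n)"
    unfolding racah_def by simp
  also have "\<dots> = (\<Sum>n\<in>{N}. racah_term a b x d e (b + d) n)"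
  proof (intro sum.mono_neutral_right ballI)
    fix n assume "n \<in> {-1..N} - {N}"
    then have "of_int n - a - e - (b + d) < 0" using N(1) by auto
    then show "racah_term a b x d e (b + d) n = 0"
      unfolding racah_term_def by (simp add: inv_fact_N_neg)
  qed (use N(2) in auto)
  finally show ?thesis by simp
qed

definition top_const :: "real \<Rightarrow> real \<Rightarrow> real \<Rightarrow> real \<Rightarrow> real" where
  "top_const a b d e = fact_N (a + b + d + e + 1) * fact_N (a + b + d + e + 1) *
     inv_fact_N (a + e - b - d) * inv_fact_N (a + e - b - d)"

lemma racah_top_weighted_square:
  assumes N: "real_of_int N = a + b + d + e"
  shows "(2*x + 1) * racah_weight a b d e x * (racah_term a b x d e (b + d) N * racah_term a b x d e (b + d) N)
     = top_const a b d e * top_summand a b d e x"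
proof -
  define u1 u2 u3 u4 where "u1 = a + b - x" and "u2 = x + b - a" and "u3 = x + d - e" and "u4 = d + e - x"
  have single: "racah_term a b x d e (b + d) N = (-1) ^ nat \<bar>N\<bar> * fact_N (a + b + d + e + 1) *
      inv_fact_N u4 * inv_fact_N u1 * inv_fact_N (a + e - b - d) * inv_fact_N u3 * inv_fact_N u2"
  proof -
    have "racah_term a b x d e (b + d) N = (-1) ^ nat \<bar>N\<bar> * fact_N (a + b + d + e + 1) * inv_fact_N (d + e - x) *
        inv_fact_N (a + b - x) * inv_fact_N (a + e - b - d) * inv_fact_N 0 * inv_fact_N 0 *
        inv_fact_N (x + d - e) * inv_fact_N (x + b - a)"
      unfolding racah_term_def N by (simp add: algebra_simps)
    then show ?thesis unfolding u1_def u2_def u3_def u4_def by simp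
  qed
  have weight: "racah_weight a b d e x = (fact_N u1 * fact_N (a - b + x) * fact_N u2 * inv_fact_N (a + b + x + 1)) *
      (fact_N u3 * fact_N (x - d + e) * fact_N u4 * inv_fact_N (x + d + e + 1))"
    unfolding racah_weight_def tri_coeff_def u1_def u2_def u3_def u4_def by (simp add: algebra_simps)
  have summand: "top_summand a b d e x = (2*x + 1) * fact_N (a - b + x) * fact_N (x - d + e) *
      inv_fact_N (a + b + x + 1) * inv_fact_N (x + d + e + 1) * inv_fact_N u4 * inv_fact_N u1 * inv_fact_N u3 * inv_fact_N u2"
    unfolding top_summand_def u1_def u2_def u3_def u4_def ..
  have sign: "(-1::real) ^ nat \<bar>N\<bar> * (-1) ^ nat \<bar>N\<bar> = 1"
    by (simp add: power_mult_distrib[symmetric])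
  have "(2*x + 1) * racah_weight a b d e x * (racah_term a b x d e (b + d) N * racah_term a b x d e (b + d) N)
     = ((-1) ^ nat \<bar>N\<bar> * (-1) ^ nat \<bar>N\<bar>) * (fact_N u1 * inv_fact_N u1 * inv_fact_N u1) *
       (fact_N u2 * inv_fact_N u2 * inv_fact_N u2) * (fact_N u3 * inv_fact_N u3 * inv_fact_N u3) *
       (fact_N u4 * inv_fact_N u4 * inv_fact_N u4) * top_const a b d e *
       ((2*x + 1) * fact_N (a - b + x) * fact_N (x - d + e) * inv_fact_N (a + b + x + 1) * inv_fact_N (x + d + e + 1))"
    unfolding single weight top_const_def by (simp only: mult_ac)
  also have "\<dots> = top_const a b d e * top_summand a b d e x"
    unfolding sign fact_N_mult_inv_fact_N_square summand by (simp only: mult_ac mult_1_left)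
  finally show ?thesis .
qed

lemma top_value_normalization:
  assumes t: "triad b d (b + d)" "triad a e (b + d)"
  shows "(2 * (b + d) + 1) * (tri_coeff b d (b + d) * tri_coeff a e (b + d)) * (top_const a b d e * top_value a b d e) = 1"
proof -
  have "2*b \<in> \<nat>" "2*d \<in> \<nat>" using triad_double_Nats(1,2)[OF t(1)] by simp_all
  moreover have "a + e - b - d \<in> \<nat>" "a + b + d - e \<in> \<nat>" "b + d + e - a \<in> \<nat>"
    using t(2) unfolding triad_def by (simp_all add: algebra_simps)
  moreover have "a + b + d + e + 1 \<in> \<nat>"
    using triad_sum_Nats[OF t(2)] by (simp add: algebra_simps)
  moreover have "2*b + 2*d \<in> \<nat>" using calculation(1,2) by simp
  moreover have "(2 * (b + d) + 1) * (tri_coeff b d (b + d) * tri_coeff a e (b + d)) * (top_const a b d e * top_value a b d e)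
    = ((2*b + 2*d + 1) * fact_N (2*b + 2*d) * inv_fact_N (2*b + 2*d + 1)) * (fact_N (2*b) * inv_fact_N (2*b)) *
      (fact_N (2*d) * inv_fact_N (2*d)) * (fact_N (a + e - b - d) * inv_fact_N (a + e - b - d)) *
      (fact_N (a + e - b - d) * inv_fact_N (a + e - b - d)) * (fact_N (a + b + d - e) * inv_fact_N (a + b + d - e)) *
      (fact_N (b + d + e - a) * inv_fact_N (b + d + e - a)) *
      (fact_N (a + b + d + e + 1) * inv_fact_N (a + b + d + e + 1)) * (fact_N (a + b + d + e + 1) * inv_fact_N (a + b + d + e + 1))"
  proof -
    have "tri_coeff b d (b + d) = fact_N (2*b) * fact_N (2*d) * inv_fact_N (2*b + 2*d + 1)"
      and "tri_coeff a e (b + d) = fact_N (a + e - b - d) * fact_N (a + b + d - e) * fact_N (b + d + e - a) *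
        inv_fact_N (a + b + d + e + 1)"
      unfolding tri_coeff_def by (simp_all add: algebra_simps)
    then show ?thesis
      unfolding top_const_def top_value_def by (simp only: mult_ac distrib_left distrib_right mult_2 add_ac)
  qed
  ultimately show ?thesis
    by (simp add: fact_N_mult_inv_fact_N fact_N_mult_inv_fact_N_succ)
qed

lemma racah_norm_top:
  assumes t: "triad b d (b + d)" "triad a e (b + d)" and K: "2 * (a + b) + 3 \<le> real K"
  shows "racah_norm K a b d e (b + d) = 1"
proof -
  have nn: "0 \<le> a" "0 \<le> b" "0 \<le> d" "0 \<le> e"
    using triad_nonneg[OF t(1)] triad_nonneg[OF t(2)] by simp_all
  have half: "2*a \<in> \<nat>" "2*b \<in> \<nat>" "2*d \<in> \<nat>" "2*e \<in> \<nat>"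
    using triad_double_Nats[OF t(1)] triad_double_Nats[OF t(2)] by simp_all
  have Nats: "a + e - (b + d) \<in> \<nat>" "a - e + (b + d) \<in> \<nat>" "- a + e + (b + d) \<in> \<nat>"
    using t(2) unfolding triad_def by blast+
  then obtain i where "a + e - (b + d) = real i" by (auto simp: Nats_iff_of_nat)
  moreover obtain j1 j2 where "2*b = real j1" "2*d = real j2" using half(2,3) by (auto simp: Nats_iff_of_nat)
  ultimately have N: "real_of_int (int (i + j1 + j2)) = a + b + d + e" by simp
  have sum: "(\<Sum>k\<in>{0..K}. top_summand a b d e (real k / 2)) = top_value a b d e"
  proof (rule top_sum_eq_top_value[OF nn half])
    show "0 \<le> a - b + e - d" using triad_le_add[OF t(2)] by simp
    show "a + b + d - e \<in> \<nat>" "b + d + e - a \<in> \<nat>"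
      using Nats(2,3) by (simp_all add: algebra_simps)
  qed (rule K)
  have "racah_inner K a b d e (\<lambda>x. racah a b x d e (b + d)) (\<lambda>x. racah a b x d e (b + d))
      = (\<Sum>k\<in>{0..K}. top_const a b d e * top_summand a b d e (real k / 2))"
    unfolding racah_inner_def
  proof (rule sum.cong[OF refl])
    fix k :: nat
    show "(2 * (real k / 2) + 1) * racah_weight a b d e (real k / 2) * racah a b (real k / 2) d e (b + d) *
        racah a b (real k / 2) d e (b + d) = top_const a b d e * top_summand a b d e (real k / 2)"
      using racah_top_weighted_square[OF N] by (simp only: racah_top_single_term[OF N] mult.assoc)
  qed
  also have "\<dots> = top_const a b d e * top_value a b d e"
    unfolding sum_distrib_left[symmetric] sum ..
  finally show ?thesis
    using top_value_normalization[OF t] unfolding racah_norm_def by simp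
qed

lemma racah_inner_swap: "racah_inner K b a e d g h = racah_inner K a b d e g h"
  unfolding racah_inner_def racah_weight_swap[of b a e d] ..

lemma racah_norm_swap: "racah_norm K b a e d f = racah_norm K a b d e f"
  unfolding racah_norm_def racah_inner_swap[of K b a e d] racah_swap_ab_de[of b a] by (simp only: mult_ac)

lemma racah_norm_eq_1_ordered:
  assumes "b + d \<le> a + e" "triad b d f" "triad a e f" and K: "2 * (a + b) + 3 \<le> real K"
  shows "racah_norm K a b d e f = 1"
proof -
  obtain j where "b + d = f + real j"
    using assms(2) unfolding triad_def by (auto simp: Nats_iff_of_nat algebra_simps)
  then show ?thesis using assms(2,3)
  proof (induction j arbitrary: f)
    case 0
    then show ?case using racah_norm_top[of b d a e K] K by simp
  next
    case (Suc j)
    have t: "triad b d (f + 1)" "triad a e (f + 1)"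
      using triad_add_nat[OF Suc.prems(2), of 1] triad_add_nat[OF Suc.prems(3), of 1] Suc.prems(1) assms(1)
      by simp_all
    then have "racah_norm K a b d e (f + 1) = 1"
      using Suc by simp
    moreover have "0 \<le> f" using triad_nonneg(3)[OF Suc.prems(2)] .
    ultimately show ?case
      using racah_norm_succ[OF _ Suc.prems(2,3) t] K by simp
  qed
qed

lemma racah_norm_eq_1:
  assumes "triad b d f" "triad a e f" and K: "2 * (a + b) + 3 \<le> real K"
  shows "racah_norm K a b d e f = 1"
proof (cases "b + d \<le> a + e")
  case False
  then show ?thesis
    using racah_norm_eq_1_ordered[of a e b d f K] assms by (simp add: racah_norm_swap add.commute)
qed (use racah_norm_eq_1_ordered assms in blast)

section \<open>The SU(2) \<open>6j\<close> symbol\<close>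

lemma delta_ok_iff_triad: "delta_ok x y z \<longleftrightarrow> triad x y z"
  unfolding delta_ok_def using triad_sum_Nats[of x y z] unfolding triad_def by blast

lemma rfact_eq_fact_N: "x \<in> \<nat> \<Longrightarrow> rfact x = fact_N x"
  by (simp add: rfact_def fact_N_def)

lemma inverse_rfact_eq_inv_fact_N: "x \<in> \<nat> \<Longrightarrow> 1 / rfact x = inv_fact_N x"
  by (simp add: rfact_def inv_fact_N_def)

lemma Delta_squared:
  assumes "triad x y z"
  shows "Delta x y z * Delta x y z = tri_coeff x y z"
proof -
  have "x + y - z \<in> \<nat>" "x - y + z \<in> \<nat>" "- x + y + z \<in> \<nat>" "x + y + z + 1 \<in> \<nat>"
    using assms triad_sum_Nats unfolding triad_def by blast+
  then have "rfact (x + y - z) * rfact (x - y + z) * rfact (- x + y + z) / rfact (x + y + z + 1) = tri_coeff x y z"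
    unfolding tri_coeff_def by (simp add: rfact_eq_fact_N inverse_rfact_eq_inv_fact_N[symmetric])
  moreover have "0 \<le> tri_coeff x y z"
    unfolding tri_coeff_def by (simp add: fact_N_nonneg inv_fact_N_nonneg)
  ultimately show ?thesis unfolding Delta_def by simp
qed

lemma racah_ok_imp_range: "racah_ok a b c d e f n \<Longrightarrow> -1 \<le> n \<and> n \<le> \<lceil>a + b + d + e\<rceil>"
  unfolding racah_ok_def using Nats_nonneg[of "of_int n + 1"] Nats_nonneg[of "a + b + d + e - of_int n"]
  by (auto simp: le_ceiling_iff)

lemma racah_term_eq_if_racah_ok:
  "racah_term a b c d e f n = (if racah_ok a b c d e f n then
     (-1) ^ nat \<bar>n\<bar> * rfact (of_int n + 1) /
       (rfact (of_int n - a - b - c) * rfact (of_int n - c - d - e) * rfact (of_int n - b - d - f) *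
        rfact (of_int n - a - e - f) * rfact (a + b + d + e - of_int n) * rfact (a + c + d + f - of_int n) *
        rfact (b + c + e + f - of_int n))
     else 0)" if "-1 \<le> n"
proof (cases "racah_ok a b c d e f n")
  case True
  then show ?thesis unfolding racah_term_def racah_ok_def
    by (simp add: rfact_eq_fact_N inverse_rfact_eq_inv_fact_N[symmetric] divide_inverse)
next
  case False
  have "of_int n + 1 = real (nat (n + 1))" using that by simp
  then have "real_of_int n + 1 \<in> \<nat>" by (simp only: of_nat_in_Nats)
  with False show ?thesis
    unfolding racah_term_def racah_ok_def by (auto simp: inv_fact_N_eq_0_iff)
qed

lemma sixj_SU2_eq_racah:
  "sixj_SU2 a b c d e f = (if triad a b c \<and> triad c d e \<and> triad b d f \<and> triad a e f
     then Delta a b c * Delta c d e * Delta b d f * Delta a e f * racah a b c d e f else 0)"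
proof -
  have "{n. racah_ok a b c d e f n} \<subseteq> {-1..\<lceil>a + b + d + e\<rceil>}"
    using racah_ok_imp_range by auto
  then have "(\<Sum>n\<in>{n. racah_ok a b c d e f n}.
       (-1) ^ nat \<bar>n\<bar> * rfact (of_int n + 1) /
       (rfact (of_int n - a - b - c) * rfact (of_int n - c - d - e) * rfact (of_int n - b - d - f) *
        rfact (of_int n - a - e - f) * rfact (a + b + d + e - of_int n) * rfact (a + c + d + f - of_int n) *
        rfact (b + c + e + f - of_int n))) = racah a b c d e f"
    unfolding racah_def
    by (intro sum.mono_neutral_cong_left) (auto simp: racah_term_eq_if_racah_ok)
  then show ?thesis unfolding sixj_SU2_def delta_ok_iff_triad by simp
qed

lemma sixj_SU2_nonzero_imp_triads:
  "sixj_SU2 a b c d e f \<noteq> 0 \<Longrightarrow> triad a b c \<and> triad c d e \<and> triad b d f \<and> triad a e f"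
  by (simp add: sixj_SU2_eq_racah split: if_splits)

lemma sixj_SU2_product:
  assumes "triad b d p" "triad a e p" "triad b d q" "triad a e q"
  shows "(2*x + 1) * sixj_SU2 a b x d e p * sixj_SU2 a b x d e q
     = (Delta b d p * Delta a e p * Delta b d q * Delta a e q) *
       ((2*x + 1) * racah_weight a b d e x * racah a b x d e p * racah a b x d e q)"
proof (cases "triad a b x \<and> triad x d e")
  case True
  then have "Delta a b x * Delta a b x = tri_coeff a b x" "Delta x d e * Delta x d e = tri_coeff x d e"
    by (simp_all add: Delta_squared)
  with True assms show ?thesis
    unfolding sixj_SU2_eq_racah racah_weight_def by (simp add: ac_simps)
next
  case False
  then have "racah a b x d e p = 0" using racah_nonzero_imp_triads by blast
  with False show ?thesis unfolding sixj_SU2_eq_racah by simp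
qed

lemma sixj_SU2_orthogonality:
  assumes K: "2 * (a + b) + 3 \<le> real K"
  shows "(\<Sum>k\<in>{0..K}. (2 * (real k / 2) + 1) * sixj_SU2 a b (real k / 2) d e p * sixj_SU2 a b (real k / 2) d e q)
    = (if p = q \<and> triad b d p \<and> triad a e p then 1 / (2*p + 1) else 0)"
proof (cases "triad b d p \<and> triad a e p \<and> triad b d q \<and> triad a e q")
  case False
  then have "sixj_SU2 a b x d e p * sixj_SU2 a b x d e q = 0" for x
    using sixj_SU2_nonzero_imp_triads by fastforce
  with False show ?thesis
    by (auto simp: mult.assoc intro: sum.neutral)
next
  case True
  then have tp: "triad b d p" "triad a e p" and tq: "triad b d q" "triad a e q" by auto
  have nn: "0 \<le> a + b" "0 \<le> p" using triad_nonneg[OF tp(1)] triad_nonneg[OF tp(2)] by simp_all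
  have "(\<Sum>k\<in>{0..K}. (2 * (real k / 2) + 1) * sixj_SU2 a b (real k / 2) d e p * sixj_SU2 a b (real k / 2) d e q)
      = (Delta b d p * Delta a e p * Delta b d q * Delta a e q) *
        racah_inner K a b d e (\<lambda>x. racah a b x d e p) (\<lambda>x. racah a b x d e q)"
    unfolding racah_inner_def sixj_SU2_product[OF tp tq] by (simp add: sum_distrib_left)
  also have "\<dots> = (if p = q \<and> triad b d p \<and> triad a e p then 1 / (2*p + 1) else 0)"
  proof (cases "p = q")
    case True
    have "Delta b d p * Delta a e p * Delta b d p * Delta a e p = tri_coeff b d p * tri_coeff a e p"
      using Delta_squared[OF tp(1)] Delta_squared[OF tp(2)] by (simp add: ac_simps)
    with racah_norm_eq_1[OF tp K] True tp nn(2) show ?thesis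
      unfolding racah_norm_def by (simp add: field_simps)
  next
    case False
    with racah_orthogonal[OF nn(2) False nn(1)] K show ?thesis by simp
  qed
  finally show ?thesis .
qed

section \<open>The extended \<open>6j\<close> symbol\<close>

lemma Ints_iff_if_diff_Ints: "(x::real) - y \<in> \<int> \<Longrightarrow> x \<in> \<int> \<longleftrightarrow> y \<in> \<int>"
  by (metis Ints_add Ints_diff add_diff_cancel_left' diff_add_cancel)

lemma triads_S_iff_su11:
  fixes a' b' c' d' p' :: real
  assumes h: "2 * a' \<in> \<int>" "2 * b' \<in> \<int>" "2 * c' \<in> \<int>" "2 * p' \<in> \<int>"
  shows "triad ((- a' - b' - c' + d') / 2 - 1) ((- a' + b' + c' + d') / 2) p' \<and>
         triad ((a' + b' - c' + d') / 2) ((a' - b' + c' + d') / 2) p'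
     \<longleftrightarrow> (su11_adm a' p' d' \<and> a' + p' + d' \<in> \<int>) \<and> (su11_adm b' c' p' \<and> b' + c' + p' \<in> \<int>)"
proof -
  have "triad ((- a' - b' - c' + d') / 2 - 1) ((- a' + b' + c' + d') / 2) p' \<and>
        triad ((a' + b' - c' + d') / 2) ((a' - b' + c' + d') / 2) p'
    \<longleftrightarrow> d' - a' - 1 - p' \<in> \<nat> \<and> p' - b' - c' - 1 \<in> \<nat> \<and> p' + b' + c' + 1 \<in> \<nat> \<and>
        a' + d' - p' \<in> \<nat> \<and> b' - c' + p' \<in> \<nat> \<and> c' - b' + p' \<in> \<nat>"
  proof -
    have "(- a' - b' - c' + d') / 2 - 1 + (- a' + b' + c' + d') / 2 - p' = d' - a' - 1 - p'"
      "(- a' - b' - c' + d') / 2 - 1 - (- a' + b' + c' + d') / 2 + p' = p' - b' - c' - 1"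
      "- ((- a' - b' - c' + d') / 2 - 1) + (- a' + b' + c' + d') / 2 + p' = p' + b' + c' + 1"
      "(a' + b' - c' + d') / 2 + (a' - b' + c' + d') / 2 - p' = a' + d' - p'"
      "(a' + b' - c' + d') / 2 - (a' - b' + c' + d') / 2 + p' = b' - c' + p'"
      "- ((a' + b' - c' + d') / 2) + (a' - b' + c' + d') / 2 + p' = c' - b' + p'"
      by (simp_all add: field_simps)
    then show ?thesis unfolding triad_def by (simp only:) blast
  qed
  also have "\<dots> \<longleftrightarrow> (a' + p' + d' \<in> \<int> \<and> b' + c' + p' \<in> \<int>) \<and>
      0 \<le> d' - a' - 1 - p' \<and> 0 \<le> p' - b' - c' - 1 \<and> 0 \<le> p' + b' + c' + 1 \<and>
      0 \<le> a' + d' - p' \<and> 0 \<le> b' - c' + p' \<and> 0 \<le> c' - b' + p'"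
  proof -
    have "d' - a' - 1 - p' \<in> \<int> \<longleftrightarrow> a' + p' + d' \<in> \<int>" "a' + d' - p' \<in> \<int> \<longleftrightarrow> a' + p' + d' \<in> \<int>"
      "p' - b' - c' - 1 \<in> \<int> \<longleftrightarrow> b' + c' + p' \<in> \<int>" "p' + b' + c' + 1 \<in> \<int> \<longleftrightarrow> b' + c' + p' \<in> \<int>"
      "b' - c' + p' \<in> \<int> \<longleftrightarrow> b' + c' + p' \<in> \<int>" "c' - b' + p' \<in> \<int> \<longleftrightarrow> b' + c' + p' \<in> \<int>"
      by (rule Ints_iff_if_diff_Ints; use h in \<open>simp add: algebra_simps\<close>)+
    then show ?thesis
      unfolding Nats_altdef2 by auto
  qed
  also have "\<dots> \<longleftrightarrow> (su11_adm a' p' d' \<and> a' + p' + d' \<in> \<int>) \<and> (su11_adm b' c' p' \<and> b' + c' + p' \<in> \<int>)"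
    unfolding su11_adm_def by argo
  finally show ?thesis .
qed

lemma sum_nonzero_int_eq_sum_nat:
  fixes T :: "int \<Rightarrow> 'a::comm_monoid_add"
  assumes "\<And>k. T k \<noteq> 0 \<Longrightarrow> 0 \<le> k \<and> k \<le> int K"
  shows "finite {k. T k \<noteq> 0} \<and> (\<Sum>k\<in>{k. T k \<noteq> 0}. T k) = (\<Sum>j\<in>{0..K}. T (int j))"
proof -
  have supp: "{k. T k \<noteq> 0} \<subseteq> {0..int K}" using assms by auto
  then have "(\<Sum>k\<in>{k. T k \<noteq> 0}. T k) = (\<Sum>k\<in>{0..int K}. T k)"
    by (intro sum.mono_neutral_left) auto
  also have "\<dots> = (\<Sum>j\<in>{0..K}. T (int j))"
  proof -
    have "{0..int K} = int ` {0..K}" by (simp add: image_int_atLeastAtMost)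
    then show ?thesis by (simp add: sum.reindex)
  qed
  finally show ?thesis using finite_subset[OF supp] by simp
qed

theorem mainTheorem2:
  fixes a' b' c' d' p' q' :: real
  assumes "2 * a' \<in> \<int>" "2 * b' \<in> \<int>" "2 * c' \<in> \<int>" "2 * d' \<in> \<int>"
    "2 * p' \<in> \<int>" "2 * q' \<in> \<int>"
  defines "T \<equiv> \<lambda>k::int. let X = real_of_int k / 2 in
             (2 * X + 1) * sixj_ext a' b' X c' d' p' * sixj_ext a' b' X c' d' q'"
  shows "finite {k. T k \<noteq> 0} \<and>
         (\<Sum>k\<in>{k. T k \<noteq> 0}. T k) =
           (if p' = q' then su11_sym a' p' d' * su11_sym b' c' p' / (2 * p' + 1) else 0)"
proof -
  define A B D E where "A = (a' + b' - c' + d') / 2" and "B = (- a' - b' - c' + d') / 2 - 1"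
    and "D = (- a' + b' + c' + d') / 2" and "E = (a' - b' + c' + d') / 2"
  define K where "K = nat \<lceil>2 * (A + B)\<rceil> + 3"
  have K: "2 * (A + B) + 3 \<le> real K" unfolding K_def by linarith
  have T: "T k = (2 * (real_of_int k / 2) + 1) * sixj_SU2 A B (real_of_int k / 2) D E p' *
      sixj_SU2 A B (real_of_int k / 2) D E q'" for k
    unfolding T_def sixj_ext_def A_def B_def D_def E_def Let_def ..
  have "0 \<le> k \<and> k \<le> int K" if "T k \<noteq> 0" for k
  proof -
    from that have "triad A B (real_of_int k / 2)"
      unfolding T using sixj_SU2_nonzero_imp_triads by fastforce
    then show ?thesis using triad_nonneg(3) triad_le_add K by fastforce
  qed
  then have "finite {k. T k \<noteq> 0}" and "(\<Sum>k\<in>{k. T k \<noteq> 0}. T k) = (\<Sum>j\<in>{0..K}. T (int j))"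
    using sum_nonzero_int_eq_sum_nat by blast+
  moreover have "(\<Sum>j\<in>{0..K}. T (int j))
      = (if p' = q' \<and> triad B D p' \<and> triad A E p' then 1 / (2 * p' + 1) else 0)"
    unfolding T using sixj_SU2_orthogonality[OF K] by simp
  moreover have "triad B D p' \<and> triad A E p' \<longleftrightarrow> su11_sym a' p' d' * su11_sym b' c' p' = 1"
    using triads_S_iff_su11[OF assms(1-3,5)] unfolding A_def B_def D_def E_def su11_sym_def by simp
  ultimately show ?thesis unfolding su11_sym_def by auto
qed

end
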